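(* Let $m,k,n\ge 1$, let $A$ be a real $m\times m$ matrix and $B$ a real $m\times k$ matrix with $\operatorname{rank}[B, AB, \dots, A^{m-1}B]=m$. Let $g:\mathbb{R}^k\times\mathbb{R}^m\times\mathbb{R}^n\to\mathbb{R}^n$ be Borel measurable and bounded, $\sup_{(u,y,z)}\|g(u,y,z)\|<\infty$, and Lipschitz continuous in $(y,z)$ uniformly with respect to $u\in\mathbb{R}^k$. Fix $y_0\in\mathbb{R}^m$, $z_0\in\mathbb{R}^n$, $T>0$, and a continuous function $G:\mathbb{R}^n\to\mathbb{R}$. For $\varepsilon>0$ let $$G^*_\varepsilon:=\inf_{u(\cdot)} G(z_\varepsilon(T)),$$ where the infimum is over measurable controls $u:[0,T]\to\mathbb{R}^k$ and the corresponding solutions $(y_\varepsilon(\cdot),z_\varepsilon(\cdot))$ of $$\varepsilon\,\frac{dy(t)}{dt}=Ay(t)+Bu(t),\quad y(0)=y_0,\qquad \frac{dz(t)}{dt}=g(u(t),y(t),z(t)),\quad z(0)=z_0.$$ Let $$G^*:=\inf_{u(\cdot),y(\cdot)} G(z(T)),$$ where the infimum is over measurable functions $u:[0,T]\to\mathbb{R}^k$, $y:[0,T]\to\mathbb{R}^m$ and the corresponding solutions $z(\cdot)$ of $\frac{dz(t)}{dt}=g(u(t),y(t),z(t))$, $z(0)=z_0$ (both $u$ and $y$ play the role of controls). Then $G^*_\varepsilon=G^*$ for every $\varepsilon>0$.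
   Context: Solutions of the differential equations are understood in the Carathéodory (absolutely continuous) sense; in the definition of $G^*_\varepsilon$ the controls range over those measurable $u$ for which the system has a solution on $[0,T]$. *)

theory Defs
  imports "HOL-Analysis.Analysis"
begin

primrec mat_pow :: "real^'m^'m \<Rightarrow> nat \<Rightarrow> real^'m^'m" where
  "mat_pow A 0 = mat 1"
| "mat_pow A (Suc i) = A ** mat_pow A i"

text \<open>Rank of the Kalman block matrix [B, AB, ..., A^(m-1) B], i.e. the dimension
  of the space spanned by its columns (the columns of the blocks A^i B, i < m).\<close>
definition kalman_rank :: "real^'m^'m \<Rightarrow> real^'k^'m \<Rightarrow> nat" where
  "kalman_rank A B = dim (\<Union>i<CARD('m). columns (mat_pow A i ** B))"

text \<open>Caratheodory solution on [0,T] of x' = f(t,x), x(0) = x0: the right-hand side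
  along x is Lebesgue integrable on [0,T] and x is its indefinite integral
  (equivalently: x absolutely continuous, x(0)=x0, x' = f(t,x) a.e.).\<close>
definition cara_solution ::
  "(real \<Rightarrow> 'a::euclidean_space \<Rightarrow> 'a) \<Rightarrow> 'a \<Rightarrow> real \<Rightarrow> (real \<Rightarrow> 'a) \<Rightarrow> bool" where
  "cara_solution f x0 T x \<longleftrightarrow>
     (\<lambda>s. f s (x s)) absolutely_integrable_on {0..T} \<and>
     (\<forall>t\<in>{0..T}. x t = x0 + integral {0..t} (\<lambda>s. f s (x s)))"

definition meas_on :: "real \<Rightarrow> (real \<Rightarrow> 'a::euclidean_space) \<Rightarrow> bool" where
  "meas_on T u \<longleftrightarrow> u \<in> borel_measurable (lebesgue_on {0..T})"

definition G_eps ::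
  "real^'m^'m \<Rightarrow> real^'k^'m \<Rightarrow> (real^'k \<Rightarrow> real^'m \<Rightarrow> real^'n \<Rightarrow> real^'n) \<Rightarrow>
   real^'m \<Rightarrow> real^'n \<Rightarrow> real \<Rightarrow> (real^'n \<Rightarrow> real) \<Rightarrow> real \<Rightarrow> real" where
  "G_eps A B g y0 z0 T G \<epsilon> = Inf {G (z T) | u y z.
      meas_on T u \<and>
      cara_solution (\<lambda>t y. (1 / \<epsilon>) *\<^sub>R (A *v y + B *v u t)) y0 T y \<and>
      cara_solution (\<lambda>t z. g (u t) (y t) z) z0 T z}"

definition G_relaxed ::
  "(real^'k \<Rightarrow> real^'m \<Rightarrow> real^'n \<Rightarrow> real^'n) \<Rightarrow>
   real^'n \<Rightarrow> real \<Rightarrow> (real^'n \<Rightarrow> real) \<Rightarrow> real" where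
  "G_relaxed g z0 T G = Inf {G (z T) | u (y :: real \<Rightarrow> real^'m) z.
      meas_on T u \<and> meas_on T y \<and>
      cara_solution (\<lambda>t z. g (u t) (y t) z) z0 T z}"

end

theory Submission
  imports Defs
begin

(* Dividing by \<epsilon>, the fast subsystem becomes y' = (A/\<epsilon>) y + (B/\<epsilon>) u, and the Kalman condition
   survives this scaling; so both infima are infima of the continuous function G over bounded sets
   of endpoints z(T), the first set contained in the second. It suffices to show that the first set
   is dense in the second.

   Let (u, y) be measurable controls of the relaxed problem. Truncate u and replace y by a
   continuous path \<phi> that is close to it in measure. A controllable linear system can follow \<phi>:
   on N short windows the control is changed so as to steer the state exactly onto \<phi>, and between
   the windows the state moves by O(T/N). The resulting control agrees with u outside a set of
   small measure, and the resulting state is L\<^sup>1-close to y after cutting distances at 1; since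
   g is bounded and Lipschitz in (y, z), Gronwall's inequality then makes the two endpoints z(T)
   close. *)


section \<open>Caratheodory solutions\<close>

lemma gronwall_inequality:
  fixes e :: "real \<Rightarrow> real"
  assumes e_cont: "continuous_on {a..b} e" and C: "0 \<le> C" and K: "0 \<le> K"
    and e_le: "\<And>t. t \<in> {a..b} \<Longrightarrow> e t \<le> C + K * integral {a..t} e"
    and t: "t \<in> {a..b}"
  shows "e t \<le> C * exp (K * (t - a))"
proof -
  define I where "I = (\<lambda>s. integral {a..s} e)"
  define w where "w = (\<lambda>s. exp (- K * (s - a)) * (C + K * I s))"
  have I_cont: "continuous_on {a..b} I"
    unfolding I_def by (intro indefinite_integral_continuous_1 integrable_continuous_interval e_cont)
  have "w t \<le> w a"
  proof (rule DERIV_nonpos_imp_decreasing_open[of a t w])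
    show "a \<le> t" using t by auto
    show "continuous_on {a..t} w"
      unfolding w_def using t by (intro continuous_intros continuous_on_subset[OF I_cont]) auto
  next
    fix x assume x: "a < x" "x < t"
    then have "(I has_vector_derivative e x) (at x within {a..b})"
      unfolding I_def using t by (intro integral_has_vector_derivative e_cont) auto
    moreover have "x \<in> interior {a..b}" using x t by auto
    ultimately have "(I has_real_derivative e x) (at x)"
      unfolding has_real_derivative_iff_has_vector_derivative by (simp only: at_within_interior)
    then have "(w has_real_derivative exp (- K * (x - a)) * K * (e x - (C + K * I x))) (at x)"
      unfolding w_def by (auto intro!: derivative_eq_intros simp: algebra_simps)
    moreover have "exp (- K * (x - a)) * K * (e x - (C + K * I x)) \<le> 0"
      using e_le[of x] x t K by (auto simp: I_def mult_nonneg_nonpos)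
    ultimately show "\<exists>y. (w has_real_derivative y) (at x) \<and> y \<le> 0" by blast
  qed
  then have "exp (- K * (t - a)) * (C + K * I t) \<le> C"
    by (simp add: w_def I_def)
  then have "exp (K * (t - a)) * (exp (- K * (t - a)) * (C + K * I t)) \<le> exp (K * (t - a)) * C"
    by (rule mult_left_mono) simp
  moreover have "exp (K * (t - a)) * exp (- K * (t - a)) = 1"
    by (simp add: exp_minus_inverse)
  ultimately have "C + K * I t \<le> C * exp (K * (t - a))"
    by (metis mult.assoc mult.commute mult_1)
  then show ?thesis using e_le[OF t] by (simp add: I_def)
qed

lemma measurable_bounded_imp_absolutely_integrable:
  fixes h :: "real \<Rightarrow> 'a::euclidean_space"
  assumes "h \<in> borel_measurable (lebesgue_on {a..b})" "\<And>s. s \<in> {a..b} \<Longrightarrow> norm (h s) \<le> B"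
  shows "h absolutely_integrable_on {a..b}"
  by (rule measurable_bounded_by_integrable_imp_absolutely_integrable[where g="\<lambda>_. B"])
     (use assms in auto)

lemma integral_norm_bound_integral_open_interval:
  fixes f :: "real \<Rightarrow> 'a::euclidean_space"
  assumes f: "f integrable_on {a..b}" and g: "g integrable_on {a..b}"
    and le: "\<And>x. x \<in> {a<..<b} \<Longrightarrow> norm (f x) \<le> g x"
  shows "norm (integral {a..b} f) \<le> integral {a..b} g"
proof -
  define f' where "f' x = (if x \<in> {a<..<b} then f x else 0)" for x
  define g' where "g' x = (if x \<in> {a<..<b} then g x else 0)" for x
  have spike: "negligible {a, b}" "\<And>x. x \<in> {a..b} - {a, b} \<Longrightarrow> x \<in> {a<..<b}" by auto
  have "integral {a..b} f = integral {a..b} f'" "integral {a..b} g = integral {a..b} g'"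
    by (auto intro!: integral_spike[OF spike(1)] simp: f'_def g'_def split: if_splits)
  moreover have "f' integrable_on {a..b}"
    by (rule integrable_spike[OF f spike(1)]) (auto simp: f'_def)
  moreover have "g' integrable_on {a..b}"
    by (rule integrable_spike[OF g spike(1)]) (auto simp: g'_def)
  ultimately show ?thesis
    using le by (auto intro!: integral_norm_bound_integral simp: f'_def g'_def)
qed

lemma integral_exp_linear:
  fixes c t :: real
  assumes "0 < c" "0 \<le> t"
  shows "integral {0..t} (\<lambda>s. exp (c * s)) = (exp (c * t) - 1) / c"
proof -
  have "((\<lambda>s. exp (c * s)) has_integral (exp (c * t) / c - exp (c * 0) / c)) {0..t}"
  proof (rule fundamental_theorem_of_calculus)
    fix x :: real
    have "((\<lambda>s. exp (c * s) / c) has_real_derivative exp (c * x) * (c * 1) / c) (at x within {0..t})"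
      using assms by (intro derivative_eq_intros) auto
    then show "((\<lambda>s. exp (c * s) / c) has_vector_derivative exp (c * x)) (at x within {0..t})"
      using assms unfolding has_real_derivative_iff_has_vector_derivative by simp
  qed (use assms in auto)
  then show ?thesis using assms by (simp add: integral_unique diff_divide_distrib)
qed

lemma integral_zero_imp_zero:
  fixes h :: "real \<Rightarrow> real"
  assumes h: "continuous_on {a..b} h" and ab: "a < b"
    and zero: "\<And>r. r \<in> {a..b} \<Longrightarrow> integral {a..r} h = 0" and r: "r \<in> {a..b}"
  shows "h r = 0"
proof -
  have "((\<lambda>u. integral {a..u} h) has_vector_derivative h r) (at r within {a..b})"
    by (rule integral_has_vector_derivative[OF h r])
  moreover have "((\<lambda>u. integral {a..u} h) has_vector_derivative 0) (at r within {a..b})"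
    by (rule has_vector_derivative_transform[OF r _ has_vector_derivative_const]) (simp add: zero)
  ultimately show ?thesis
    using vector_derivative_unique_within_closed_interval[OF ab] r by auto
qed

lemma cara_solution_integrable:
  assumes "cara_solution f a T x" "t \<in> {0..T}"
  shows "(\<lambda>s. f s (x s)) integrable_on {0..t}"
  using assms unfolding cara_solution_def
  by (auto intro: integrable_on_subinterval simp: absolutely_integrable_on_def)

lemma cara_solution_continuous:
  assumes "cara_solution f a T x"
  shows "continuous_on {0..T} x"
proof -
  have "(\<lambda>s. f s (x s)) integrable_on {0..T}"
    using assms by (simp add: cara_solution_def absolutely_integrable_on_def)
  then have "continuous_on {0..T} (\<lambda>t. a + integral {0..t} (\<lambda>s. f s (x s)))"
    by (intro continuous_intros indefinite_integral_continuous_1)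
  then show ?thesis
    by (rule continuous_on_eq) (use assms in \<open>auto simp: cara_solution_def\<close>)
qed

lemma cara_solution_measurable:
  assumes "cara_solution f a T x"
  shows "x \<in> borel_measurable (lebesgue_on {0..T})"
  by (rule continuous_imp_measurable_on_sets_lebesgue[OF cara_solution_continuous[OF assms]]) auto

lemma cara_solution_subinterval:
  assumes "cara_solution f a T x" "T' \<le> T"
  shows "cara_solution f a T' x"
  using assms unfolding cara_solution_def
  by (auto intro: absolutely_integrable_on_subinterval)

lemma cara_solution_increment:
  assumes x: "cara_solution f x0 T x" and ar: "0 \<le> a" "a \<le> r" "r \<le> T"
  shows "x r - x a = integral {a..r} (\<lambda>s. f s (x s))"
proof -
  have "integral {0..a} (\<lambda>s. f s (x s)) + integral {a..r} (\<lambda>s. f s (x s)) = integral {0..r} (\<lambda>s. f s (x s))"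
    using ar cara_solution_integrable[OF x, of r] by (intro Henstock_Kurzweil_Integration.integral_combine) auto
  moreover have "x r = x0 + integral {0..r} (\<lambda>s. f s (x s))" "x a = x0 + integral {0..a} (\<lambda>s. f s (x s))"
    using x ar unfolding cara_solution_def by auto
  ultimately show ?thesis by (simp add: algebra_simps)
qed

lemma cara_solution_stability:
  fixes f h :: "real \<Rightarrow> 'a::euclidean_space \<Rightarrow> 'a"
  assumes lip: "\<And>s x x'. s \<in> {0..T} \<Longrightarrow> norm (f s x - f s x') \<le> L * norm (x - x')" and L: "0 \<le> L"
    and x: "cara_solution f a T x" and y: "cara_solution h a T y"
    and D_int: "(\<lambda>s. norm (f s (y s) - h s (y s))) integrable_on {0..T}"
    and t: "t \<in> {0..T}"
  shows "norm (x t - y t) \<le> integral {0..T} (\<lambda>s. norm (f s (y s) - h s (y s))) * exp (L * t)"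
proof -
  define D where "D = (\<lambda>s. norm (f s (y s) - h s (y s)))"
  have D_int': "D integrable_on {0..r}" if "r \<in> {0..T}" for r
    using that by (intro integrable_on_subinterval[OF D_int[folded D_def]]) auto
  have D_le: "integral {0..r} D \<le> integral {0..T} D" if "r \<in> {0..T}" for r
    using that D_int'[OF that] D_int by (intro integral_subset_le) (auto simp: D_def)
  have xy_cont: "continuous_on {0..T} (\<lambda>r. norm (x r - y r))"
    by (intro continuous_intros cara_solution_continuous[OF x] cara_solution_continuous[OF y])
  have "norm (x t - y t) \<le> integral {0..T} D * exp (L * (t - 0))"
  proof (rule gronwall_inequality[OF xy_cont _ L _ t])
    show "0 \<le> integral {0..T} D" using D_int by (intro integral_nonneg) (auto simp: D_def)
  next
    fix r assume r: "r \<in> {0..T}"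
    have cont_r: "continuous_on {0..r} (\<lambda>s. norm (x s - y s))"
      using r by (intro continuous_on_subset[OF xy_cont]) auto
    have "norm (x r - y r) = norm (integral {0..r} (\<lambda>s. f s (x s) - h s (y s)))"
      using x y r unfolding cara_solution_def
      by (simp add: integral_diff cara_solution_integrable[OF x r] cara_solution_integrable[OF y r])
    also have "\<dots> \<le> integral {0..r} (\<lambda>s. L * norm (x s - y s) + D s)"
    proof (rule integral_norm_bound_integral)
      show "(\<lambda>s. f s (x s) - h s (y s)) integrable_on {0..r}"
        by (intro integrable_diff cara_solution_integrable[OF x r] cara_solution_integrable[OF y r])
      show "(\<lambda>s. L * norm (x s - y s) + D s) integrable_on {0..r}"
        by (intro integrable_add integrable_continuous_interval continuous_intros cont_r D_int' r)
      fix s assume "s \<in> {0..r}"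
      then have "norm (f s (x s) - f s (y s)) \<le> L * norm (x s - y s)" using r lip by auto
      then show "norm (f s (x s) - h s (y s)) \<le> L * norm (x s - y s) + D s"
        unfolding D_def using norm_triangle_ineq[of "f s (x s) - f s (y s)" "f s (y s) - h s (y s)"]
        by simp
    qed
    also have "\<dots> = L * integral {0..r} (\<lambda>s. norm (x s - y s)) + integral {0..r} D"
      by (subst integral_add) (auto intro!: integrable_continuous_interval continuous_intros cont_r D_int' r)
    also have "\<dots> \<le> integral {0..T} D + L * integral {0..r} (\<lambda>s. norm (x s - y s))"
      using D_le[OF r] by simp
    finally show "norm (x r - y r) \<le> integral {0..T} D + L * integral {0..r} (\<lambda>s. norm (x s - y s))" .
  qed
  then show ?thesis by (simp add: D_def)
qed

lemma cara_solution_unique: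
  assumes "\<And>s x x'. s \<in> {0..T} \<Longrightarrow> norm (f s x - f s x') \<le> L * norm (x - x')" "0 \<le> L"
    and "cara_solution f a T x" "cara_solution f a T y" "t \<in> {0..T}"
  shows "x t = y t"
proof -
  have "norm (x t - y t) \<le> integral {0..T} (\<lambda>s. norm (f s (y s) - f s (y s))) * exp (L * t)"
    using cara_solution_stability[OF assms(1-4) _ assms(5)] by (simp add: integrable_0)
  then show ?thesis by simp
qed

locale lipschitz_rhs =
  fixes f :: "real \<Rightarrow> 'a::euclidean_space \<Rightarrow> 'a" and T L M :: real
  assumes T_nonneg: "0 \<le> T" and L_pos: "0 < L"
    and measurable_along:
      "\<And>x. continuous_on {0..T} x \<Longrightarrow> (\<lambda>s. f s (x s)) \<in> borel_measurable (lebesgue_on {0..T})"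
    and lipschitz: "\<And>s x x'. s \<in> {0..T} \<Longrightarrow> norm (f s x - f s x') \<le> L * norm (x - x')"
    and bounded_at_0: "\<And>s. s \<in> {0..T} \<Longrightarrow> norm (f s 0) \<le> M"
begin

lemma norm_le: "s \<in> {0..T} \<Longrightarrow> norm (f s x) \<le> M + L * norm x"
  using lipschitz[of s x 0] bounded_at_0[of s] norm_triangle_ineq[of "f s x - f s 0" "f s 0"] by simp

lemma absolutely_integrable_along:
  assumes x: "continuous_on {0..T} x"
  shows "(\<lambda>s. f s (x s)) absolutely_integrable_on {0..T}"
proof -
  obtain B where B: "\<And>s. s \<in> {0..T} \<Longrightarrow> norm (x s) \<le> B"
    using compact_imp_bounded[OF compact_continuous_image[OF x]] by (metis bounded_iff imageI compact_Icc)
  show ?thesis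
  proof (rule measurable_bounded_imp_absolutely_integrable[OF measurable_along[OF x]])
    fix s assume "s \<in> {0..T}"
    then show "norm (f s (x s)) \<le> M + L * B"
      using norm_le[of s "x s"] B[of s] L_pos by (meson add_left_mono mult_left_mono less_imp_le order_trans)
  qed
qed

lemma integrable_along:
  assumes "continuous_on {0..T} x" "t \<in> {0..T}"
  shows "(\<lambda>s. f s (x s)) integrable_on {0..t}"
  using assms absolutely_integrable_along[of x]
  by (auto intro: integrable_on_subinterval simp: absolutely_integrable_on_def)

primrec picard :: "'a \<Rightarrow> nat \<Rightarrow> real \<Rightarrow> 'a" where
  "picard x0 0 = (\<lambda>t. x0)"
| "picard x0 (Suc n) = (\<lambda>t. x0 + integral {0..t} (\<lambda>s. f s (picard x0 n s)))"

lemma picard_continuous: "continuous_on {0..T} (picard x0 n)"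
proof (induction n)
  case (Suc n)
  show ?case
    using integrable_along[OF Suc, of T] T_nonneg
    by (auto intro!: continuous_intros indefinite_integral_continuous_1)
qed simp

lemma M_nonneg: "0 \<le> M"
  using bounded_at_0[of 0] T_nonneg by (auto intro: order_trans[OF norm_ge_zero])

(* Measured with the weight exp (2 L t), one Picard step halves distances. *)
lemma picard_step_contraction:
  assumes p: "continuous_on {0..T} p" and q: "continuous_on {0..T} q" and t: "t \<in> {0..T}"
    and pq: "\<And>s. s \<in> {0..T} \<Longrightarrow> norm (p s - q s) \<le> c * exp (2 * L * s)"
  shows "norm (integral {0..t} (\<lambda>s. f s (p s)) - integral {0..t} (\<lambda>s. f s (q s)))
    \<le> c / 2 * exp (2 * L * t)"
proof -
  have c: "0 \<le> c" using order_trans[OF norm_ge_zero pq[of 0]] T_nonneg by simp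
  have "norm (integral {0..t} (\<lambda>s. f s (p s)) - integral {0..t} (\<lambda>s. f s (q s)))
      = norm (integral {0..t} (\<lambda>s. f s (p s) - f s (q s)))"
    using t by (simp add: integral_diff integrable_along p q)
  also have "\<dots> \<le> integral {0..t} (\<lambda>s. L * c * exp (2 * L * s))"
  proof (intro integral_norm_bound_integral integrable_diff integrable_along p q t)
    fix s assume "s \<in> {0..t}"
    then have s: "s \<in> {0..T}" using t by auto
    have "norm (f s (p s) - f s (q s)) \<le> L * norm (p s - q s)" using lipschitz[OF s] by blast
    also have "\<dots> \<le> L * (c * exp (2 * L * s))" using pq[OF s] L_pos by simp
    finally show "norm (f s (p s) - f s (q s)) \<le> L * c * exp (2 * L * s)" by (simp add: mult.assoc)
  qed (intro integrable_continuous_interval continuous_intros)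
  also have "\<dots> = L * c * ((exp (2 * L * t) - 1) / (2 * L))"
    using integral_exp_linear[of "2 * L" t] L_pos t by simp
  also have "\<dots> \<le> c / 2 * exp (2 * L * t)"
    using L_pos c by (simp add: field_simps)
  finally show ?thesis .
qed

lemma picard_increment_bound:
  assumes "t \<in> {0..T}"
  shows "norm (picard x0 (Suc n) t - picard x0 n t) \<le> (M + L * norm x0) * T * (1/2)^n * exp (2 * L * t)"
  using assms
proof (induction n arbitrary: t)
  case 0
  have C: "0 \<le> M + L * norm x0" using M_nonneg L_pos by simp
  have "norm (picard x0 (Suc 0) t - picard x0 0 t) = norm (integral {0..t} (\<lambda>s. f s x0))" by simp
  also have "\<dots> \<le> integral {0..t} (\<lambda>s. M + L * norm x0)"
    using 0 integrable_along[of "\<lambda>_. x0" t] norm_le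
    by (intro integral_norm_bound_integral) auto
  also have "\<dots> = (M + L * norm x0) * t" using 0 by simp
  also have "\<dots> \<le> (M + L * norm x0) * T"
    using 0 C by (intro mult_left_mono) auto
  also have "\<dots> \<le> (M + L * norm x0) * T * exp (2 * L * t)"
    using mult_left_mono[of 1 "exp (2 * L * t)" "(M + L * norm x0) * T"] 0 C L_pos T_nonneg by simp
  finally show ?case by simp
next
  case (Suc n)
  have "norm (picard x0 (Suc (Suc n)) t - picard x0 (Suc n) t)
      \<le> (M + L * norm x0) * T * (1/2)^n / 2 * exp (2 * L * t)"
    using picard_step_contraction[OF picard_continuous picard_continuous Suc.prems Suc.IH] by simp
  then show ?case by simp
qed

lemma picard_uniform_limit: "\<exists>x. uniform_limit {0..T} (picard x0) x sequentially"
proof -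
  define K where "K = (M + L * norm x0) * T * exp (2 * L * T)"
  have "norm (picard x0 (Suc n) t - picard x0 n t) \<le> K * (1/2)^n" if "t \<in> {0..T}" for n t
  proof -
    have "(M + L * norm x0) * T * (1/2)^n * exp (2 * L * t) \<le> (M + L * norm x0) * T * (1/2)^n * exp (2 * L * T)"
      using that L_pos M_nonneg T_nonneg by (intro mult_left_mono) auto
    then show ?thesis using picard_increment_bound[OF that, of x0 n] by (simp add: K_def algebra_simps)
  qed
  moreover have "summable (\<lambda>n. K * (1/2::real)^n)" by (intro summable_mult summable_geometric) auto
  ultimately have "uniform_limit {0..T} (\<lambda>n t. \<Sum>i<n. picard x0 (Suc i) t - picard x0 i t)
      (\<lambda>t. \<Sum>i. picard x0 (Suc i) t - picard x0 i t) sequentially"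
    by (intro Weierstrass_m_test) auto
  then have "uniform_limit {0..T} (\<lambda>n t. x0 + (\<Sum>i<n. picard x0 (Suc i) t - picard x0 i t))
      (\<lambda>t. x0 + (\<Sum>i. picard x0 (Suc i) t - picard x0 i t)) sequentially"
    by (intro uniform_limit_add uniform_limit_const)
  moreover have "x0 + (\<Sum>i<n. picard x0 (Suc i) t - picard x0 i t) = picard x0 n t" for n t
    using sum_lessThan_telescope[of "\<lambda>i. picard x0 i t" n] by simp
  ultimately show ?thesis by auto
qed

lemma integral_along_tendsto:
  assumes lim: "uniform_limit {0..T} p x sequentially" and t: "t \<in> {0..T}"
    and p_cont: "\<And>n. continuous_on {0..T} (p n)" and x_cont: "continuous_on {0..T} x"
  shows "(\<lambda>n. integral {0..t} (\<lambda>s. f s (p n s))) \<longlonglongrightarrow> integral {0..t} (\<lambda>s. f s (x s))"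
proof (rule LIMSEQ_I)
  fix r :: real assume "0 < r"
  then have e: "0 < r / (2 * L * (T + 1))" using L_pos T_nonneg by simp
  from lim[unfolded uniform_limit_iff, rule_format, OF e]
  obtain N where N: "\<forall>n\<ge>N. \<forall>s\<in>{0..T}. dist (p n s) (x s) < r / (2 * L * (T + 1))"
    by (auto simp: eventually_sequentially)
  have "norm (integral {0..t} (\<lambda>s. f s (p n s)) - integral {0..t} (\<lambda>s. f s (x s))) < r" if n: "N \<le> n" for n
  proof -
    have "norm (integral {0..t} (\<lambda>s. f s (p n s)) - integral {0..t} (\<lambda>s. f s (x s)))
        = norm (integral {0..t} (\<lambda>s. f s (p n s) - f s (x s)))"
      using t by (simp add: integral_diff integrable_along p_cont x_cont)
    also have "\<dots> \<le> integral {0..t} (\<lambda>s. r / (2 * (T + 1)))"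
    proof (intro integral_norm_bound_integral integrable_diff integrable_along p_cont x_cont t)
      fix s assume "s \<in> {0..t}"
      then have s: "s \<in> {0..T}" using t by auto
      have "norm (f s (p n s) - f s (x s)) \<le> L * norm (p n s - x s)" using lipschitz[OF s] by blast
      also have "\<dots> \<le> L * (r / (2 * L * (T + 1)))"
        using N n s L_pos by (intro mult_left_mono) (auto simp: dist_norm less_imp_le)
      finally show "norm (f s (p n s) - f s (x s)) \<le> r / (2 * (T + 1))" using L_pos by simp
    qed auto
    also have "\<dots> = t * (r / (2 * (T + 1)))" using t by simp
    also have "\<dots> \<le> (T + 1) * (r / (2 * (T + 1)))"
      using t \<open>0 < r\<close> T_nonneg by (intro mult_right_mono) auto
    also have "\<dots> = r / 2" using T_nonneg by (simp add: field_simps)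
    also have "\<dots> < r" using \<open>0 < r\<close> by simp
    finally show ?thesis .
  qed
  then show "\<exists>N. \<forall>n\<ge>N. norm (integral {0..t} (\<lambda>s. f s (p n s)) - integral {0..t} (\<lambda>s. f s (x s))) < r"
    by blast
qed

theorem cara_solution_exists: "\<exists>x. cara_solution f x0 T x"
proof -
  obtain x where lim: "uniform_limit {0..T} (picard x0) x sequentially"
    using picard_uniform_limit by blast
  have x_cont: "continuous_on {0..T} x"
    by (rule uniform_limit_theorem[OF _ lim]) (auto intro: picard_continuous always_eventually)
  have "x t = x0 + integral {0..t} (\<lambda>s. f s (x s))" if t: "t \<in> {0..T}" for t
  proof (rule LIMSEQ_unique)
    show "(\<lambda>n. picard x0 (Suc n) t) \<longlonglongrightarrow> x t"
      using tendsto_uniform_limitI[OF lim t] by (rule LIMSEQ_Suc)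
    show "(\<lambda>n. picard x0 (Suc n) t) \<longlonglongrightarrow> x0 + integral {0..t} (\<lambda>s. f s (x s))"
      unfolding picard.simps
      by (intro tendsto_add tendsto_const integral_along_tendsto[OF lim t picard_continuous x_cont])
  qed
  then show ?thesis
    using absolutely_integrable_along[OF x_cont] T_nonneg unfolding cara_solution_def by blast
qed

end

section \<open>Linear control systems\<close>

lemma matrix_vector_mult_bound:
  fixes A :: "real^'n^'m"
  obtains K where "0 < K" "\<And>x. norm (A *v x) \<le> K * norm x"
  using bounded_linear.pos_bounded[OF matrix_vector_mul_bounded_linear[of A]]
  by (metis mult.commute)

definition lin_rhs :: "real^'m^'m \<Rightarrow> real^'k^'m \<Rightarrow> (real \<Rightarrow> real^'k) \<Rightarrow> real \<Rightarrow> real^'m \<Rightarrow> real^'m"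
  where "lin_rhs A B u = (\<lambda>t y. A *v y + B *v u t)"

lemma lin_rhs_diff: "lin_rhs A B u s x - lin_rhs A B u s x' = A *v (x - x')"
  by (simp add: lin_rhs_def matrix_vector_mult_diff_distrib)

lemma lin_rhs_scaleR: "lin_rhs (c *\<^sub>R A) (c *\<^sub>R B) u = (\<lambda>t y. c *\<^sub>R (A *v y + B *v u t))"
  by (simp add: lin_rhs_def scaleR_matrix_vector_assoc[symmetric] scaleR_right_distrib)

lemma lipschitz_rhs_lin_rhs:
  fixes A :: "real^'m^'m" and B :: "real^'k^'m"
  assumes T: "0 \<le> T" and u: "meas_on T u" and R: "\<And>t. norm (u t) \<le> R"
  obtains KA KB where "lipschitz_rhs (lin_rhs A B u) T KA (KB * R)"
proof -
  obtain KA where KA: "0 < KA" "\<And>x. norm (A *v x) \<le> KA * norm x" using matrix_vector_mult_bound by blast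
  obtain KB where KB: "0 < KB" "\<And>x. norm (B *v x) \<le> KB * norm x" using matrix_vector_mult_bound by blast
  have "lipschitz_rhs (lin_rhs A B u) T KA (KB * R)"
  proof
    fix x :: "real \<Rightarrow> real^'m" assume "continuous_on {0..T} x"
    then have "x \<in> borel_measurable (lebesgue_on {0..T})"
      by (rule continuous_imp_measurable_on_sets_lebesgue) auto
    with u show "(\<lambda>s. lin_rhs A B u s (x s)) \<in> borel_measurable (lebesgue_on {0..T})"
      unfolding lin_rhs_def meas_on_def
      by (intro borel_measurable_add measurable_compose[OF _ borel_measurable_continuous_onI
          [OF linear_continuous_on[OF matrix_vector_mul_bounded_linear]]])
  next
    fix s x x'
    show "norm (lin_rhs A B u s x - lin_rhs A B u s x') \<le> KA * norm (x - x')"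
      unfolding lin_rhs_diff by (rule KA(2))
  next
    fix s
    show "norm (lin_rhs A B u s 0) \<le> KB * R"
      using KB(2)[of "u s"] R[of s] KB(1) by (simp add: lin_rhs_def order_trans)
  qed (use T KA in auto)
  then show ?thesis by (rule that)
qed

lemma lin_solution_exists:
  assumes "0 \<le> T" "meas_on T u" "\<And>t. norm (u t) \<le> R"
  shows "\<exists>y. cara_solution (lin_rhs A B u) a T y"
  using lipschitz_rhs_lin_rhs[OF assms] lipschitz_rhs.cara_solution_exists by metis

lemma lin_rhs_absolutely_integrable:
  assumes "0 \<le> T" "meas_on T u" "\<And>t. norm (u t) \<le> R" "continuous_on {0..T} y"
  shows "(\<lambda>s. lin_rhs A B u s (y s)) absolutely_integrable_on {0..T}"
  using lipschitz_rhs_lin_rhs[OF assms(1-3)] lipschitz_rhs.absolutely_integrable_along assms(4) by metis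

lemma lin_solution_add:
  assumes "cara_solution (lin_rhs A B u1) a1 T y1" "cara_solution (lin_rhs A B u2) a2 T y2"
  shows "cara_solution (lin_rhs A B (\<lambda>t. u1 t + u2 t)) (a1 + a2) T (\<lambda>t. y1 t + y2 t)"
proof -
  have eq: "lin_rhs A B (\<lambda>t. u1 t + u2 t) s (y1 s + y2 s) = lin_rhs A B u1 s (y1 s) + lin_rhs A B u2 s (y2 s)" for s
    by (simp add: lin_rhs_def matrix_vector_right_distrib)
  show ?thesis
    using assms unfolding cara_solution_def eq
    by (auto simp: set_integral_add integral_add cara_solution_integrable[OF assms(1)]
        cara_solution_integrable[OF assms(2)])
qed

lemma lin_solution_scaleR:
  assumes "cara_solution (lin_rhs A B u) a T y"
  shows "cara_solution (lin_rhs A B (\<lambda>t. c *\<^sub>R u t)) (c *\<^sub>R a) T (\<lambda>t. c *\<^sub>R y t)"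
proof -
  have eq: "lin_rhs A B (\<lambda>t. c *\<^sub>R u t) s (c *\<^sub>R y s) = c *\<^sub>R lin_rhs A B u s (y s)" for s
    by (simp add: lin_rhs_def matrix_vector_mult_scaleR scaleR_add_right)
  show ?thesis
    using assms unfolding cara_solution_def eq
    by (auto simp: absolutely_integrable_scaleR_left scaleR_add_right)
qed

lemma lin_solution_unique:
  fixes A :: "real^'m^'m"
  assumes "cara_solution (lin_rhs A B u) a T y1" "cara_solution (lin_rhs A B u) a T y2" "t \<in> {0..T}"
  shows "y1 t = y2 t"
proof -
  obtain KA where KA: "0 < KA" "\<And>x. norm (A *v x) \<le> KA * norm x" using matrix_vector_mult_bound by blast
  show ?thesis
    by (rule cara_solution_unique[OF _ _ assms, of KA]) (use KA in \<open>auto simp: lin_rhs_diff\<close>)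
qed

lemma lin_solution_zero_while_control_zero:
  assumes sol: "cara_solution (lin_rhs A B u) 0 T y" and s: "s \<le> T"
    and u0: "\<And>t. t \<in> {0..s} \<Longrightarrow> u t = 0" and t: "t \<in> {0..s}"
  shows "y t = 0"
proof -
  have "cara_solution (lin_rhs A B u) 0 s (\<lambda>_. 0)"
  proof -
    have zero: "lin_rhs A B u \<sigma> 0 = 0" if "\<sigma> \<in> {0..s}" for \<sigma>
      using u0[OF that] by (simp add: lin_rhs_def)
    have "integral {0..r} (\<lambda>\<sigma>. lin_rhs A B u \<sigma> 0) = integral {0..r} (\<lambda>_. 0)" if "r \<in> {0..s}" for r
      using that by (intro integral_cong zero) auto
    then show ?thesis
      unfolding cara_solution_def absolutely_integrable_on_def
      by (auto intro: integrable_eq[OF integrable_0] simp: zero)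
  qed
  with lin_solution_unique[OF cara_solution_subinterval[OF sol s] _ t] show ?thesis by simp
qed

lemma lin_solution_drift:
  fixes A :: "real^'m^'m" and B :: "real^'k^'m"
  assumes sol: "cara_solution (lin_rhs A B u) y0 T y"
    and ab: "0 \<le> a" "a \<le> b" "b \<le> T" and t: "t \<in> {a..b}"
    and u_le: "\<And>\<sigma>. \<sigma> \<in> {a<..<b} \<Longrightarrow> norm (u \<sigma>) \<le> R" and R: "0 \<le> R"
    and ya: "norm (y a) \<le> P"
    and KA: "0 \<le> KA" "\<And>x. norm (A *v x) \<le> KA * norm x"
    and KB: "0 \<le> KB" "\<And>x. norm (B *v x) \<le> KB * norm x"
  shows "norm (y t - y a) \<le> (b - a) * ((KA * P + KB * R) * exp (KA * T))"
proof -
  define F where "F = (\<lambda>\<sigma>. lin_rhs A B u \<sigma> (y \<sigma>))"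
  define K1 where "K1 = KA * norm (y a) + KB * R"
  have K1: "0 \<le> K1" using KA KB R by (simp add: K1_def)
  have y_cont: "continuous_on {a..b} y"
    using continuous_on_subset[OF cara_solution_continuous[OF sol]] ab by auto
  have F_int: "F integrable_on {a..r}" if "r \<in> {a..b}" for r
    using cara_solution_integrable[OF sol, of r] that ab
    by (auto intro: integrable_on_subinterval simp: F_def)
  have diff: "y r - y a = integral {a..r} F" if "r \<in> {a..b}" for r
    unfolding F_def using that ab by (intro cara_solution_increment[OF sol]) auto
  have "norm (y t - y a) \<le> (b - a) * K1 * exp (KA * (t - a))"
  proof (rule gronwall_inequality[where e="\<lambda>r. norm (y r - y a)", OF _ _ KA(1) _ t])
    show "continuous_on {a..b} (\<lambda>r. norm (y r - y a))" by (intro continuous_intros y_cont)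
    show "0 \<le> (b - a) * K1" using ab K1 by simp
  next
    fix r assume r: "r \<in> {a..b}"
    have e_cont: "continuous_on {a..r} (\<lambda>\<sigma>. norm (y \<sigma> - y a))"
      using r by (intro continuous_intros continuous_on_subset[OF y_cont]) auto
    have "norm (y r - y a) \<le> integral {a..r} (\<lambda>\<sigma>. K1 + KA * norm (y \<sigma> - y a))"
      unfolding diff[OF r]
    proof (rule integral_norm_bound_integral_open_interval[OF F_int[OF r]])
      show "(\<lambda>\<sigma>. K1 + KA * norm (y \<sigma> - y a)) integrable_on {a..r}"
        by (intro integrable_continuous_interval continuous_intros e_cont)
      fix \<sigma> assume "\<sigma> \<in> {a<..<r}"
      then have "norm (u \<sigma>) \<le> R" using r by (intro u_le) auto
      then have "norm (A *v y \<sigma>) + norm (B *v u \<sigma>) \<le> KA * (norm (y \<sigma> - y a) + norm (y a)) + KB * R"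
        using KA KB norm_triangle_sub[of "y \<sigma>" "y a"]
        by (intro add_mono order_trans[OF KA(2)] order_trans[OF KB(2)] mult_left_mono) auto
      then show "norm (F \<sigma>) \<le> K1 + KA * norm (y \<sigma> - y a)"
        using norm_triangle_ineq[of "A *v y \<sigma>" "B *v u \<sigma>"]
        by (simp add: F_def lin_rhs_def K1_def algebra_simps)
    qed
    also have "\<dots> = (r - a) * K1 + KA * integral {a..r} (\<lambda>\<sigma>. norm (y \<sigma> - y a))"
      using r by (subst integral_add) (auto intro!: integrable_continuous_interval continuous_intros e_cont)
    also have "\<dots> \<le> (b - a) * K1 + KA * integral {a..r} (\<lambda>\<sigma>. norm (y \<sigma> - y a))"
      using r K1 by (simp add: mult_right_mono)
    finally show "norm (y r - y a) \<le> (b - a) * K1 + KA * integral {a..r} (\<lambda>\<sigma>. norm (y \<sigma> - y a))" .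
  qed
  also have "\<dots> \<le> (b - a) * ((KA * P + KB * R) * exp (KA * T))"
    unfolding mult.assoc K1_def
  proof (intro mult_left_mono mult_mono add_mono)
    show "exp (KA * (t - a)) \<le> exp (KA * T)" using t ab KA(1) by (auto intro: mult_left_mono)
  qed (use ab ya KA(1) KB(1) R order_trans[OF norm_ge_zero ya] in auto)
  finally show ?thesis .
qed

lemma lin_solution_delay:
  fixes A :: "real^'m^'m" and B :: "real^'k^'m"
  assumes Y: "cara_solution (lin_rhs A B (\<lambda>_. c)) 0 T Y"
    and t0: "0 \<le> t0" and t1: "t0 \<le> t1" "t1 \<le> t0 + T"
  shows "cara_solution (lin_rhs A B (\<lambda>t. indicator {t0<..t1} t *\<^sub>R c)) 0 t1 (\<lambda>t. Y (max 0 (t - t0)))"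
proof -
  define w where "w = (\<lambda>t. indicator {t0<..t1} t *\<^sub>R c)"
  define F where "F = (\<lambda>\<sigma>. lin_rhs A B w \<sigma> (Y (max 0 (\<sigma> - t0))))"
  define H where "H = (\<lambda>\<rho>. lin_rhs A B (\<lambda>_. c) \<rho> (Y \<rho>))"
  have Y0: "Y 0 = 0" using Y t0 t1 by (simp add: cara_solution_def)
  have F_before: "F \<sigma> = 0" if "\<sigma> \<le> t0" for \<sigma>
    using that Y0 by (simp add: F_def lin_rhs_def w_def)
  have F_after: "F \<sigma> = H (\<sigma> - t0)" if "t0 < \<sigma>" "\<sigma> \<le> t1" for \<sigma>
    using that by (simp add: F_def H_def lin_rhs_def w_def)
  have F_before_integral: "integral {0..r} F = 0" if "r \<le> t0" for r
  proof -
    have "integral {0..r} F = integral {0..r} (\<lambda>_. 0)"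
      by (rule integral_cong) (use that F_before in auto)
    then show ?thesis by simp
  qed
  have Y_cont: "continuous_on {0..t1} (\<lambda>t. Y (max 0 (t - t0)))"
    by (rule continuous_on_compose2[OF cara_solution_continuous[OF Y]])
      (use t1 in \<open>auto intro!: continuous_intros\<close>)
  have w_meas: "meas_on t1 w"
    unfolding meas_on_def w_def
    by (intro borel_measurable_scaleR borel_measurable_const measurable_restrict_space1 measurable_completion)
      simp
  have w_le: "norm (w t) \<le> norm c" for t by (simp add: w_def indicator_def)
  have F_int: "F absolutely_integrable_on {0..t1}"
    unfolding F_def using t0 t1 by (intro lin_rhs_absolutely_integrable[OF _ w_meas w_le Y_cont]) simp
  have "Y (max 0 (t - t0)) = integral {0..t} F" if t: "t \<in> {0..t1}" for t
  proof (cases "t \<le> t0")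
    case True
    then show ?thesis using Y0 F_before_integral by simp
  next
    case False
    have "F integrable_on {0..t1}" using F_int by (simp add: absolutely_integrable_on_def)
    then have "F integrable_on {0..t}" by (rule integrable_on_subinterval) (use t in auto)
    then have "integral {0..t} F = integral {0..t0} F + integral {t0..t} F"
      using False t0 by (intro Henstock_Kurzweil_Integration.integral_combine[symmetric]) auto
    also have "integral {0..t0} F = 0"
      by (rule F_before_integral) simp
    also have "integral {t0..t} F = integral {t0..t} (H \<circ> (+) (- t0))"
      by (rule integral_spike[of "{t0}"]) (use t F_after in auto)
    also have "\<dots> = Y (t - t0)"
      using integral_shift_Icc_real[of t0 t H "- t0"] Y False t t1 by (simp add: cara_solution_def H_def)
    finally show ?thesis using False by simp
  qed
  then show ?thesis
    using F_int by (simp add: cara_solution_def F_def w_def)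
qed

section \<open>Controllability\<close>

lemma mat_pow_commute: "mat_pow A j ** A = A ** mat_pow A j"
  by (induction j) (simp_all, metis matrix_mul_assoc)

lemma mat_pow_Suc_mult: "mat_pow A j *v (A *v x) = mat_pow A (Suc j) *v x"
  by (simp add: matrix_vector_mul_assoc mat_pow_commute)

lemma mat_pow_scaleR_mult: "mat_pow (c *\<^sub>R A) j *v x = c ^ j *\<^sub>R (mat_pow A j *v x)"
  by (induction j)
    (simp_all add: matrix_vector_mul_assoc[symmetric] scaleR_matrix_vector_assoc[symmetric]
      matrix_vector_mult_scaleR)

(* The orthogonal-complement form of the Kalman rank condition; unlike the rank formulation it is
   visibly invariant under scaling A and B by the same nonzero factor. *)
definition controllable :: "real^'m^'m \<Rightarrow> real^'k^'m \<Rightarrow> bool" where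
  "controllable A B \<longleftrightarrow> (\<forall>v. (\<forall>j x. v \<bullet> (mat_pow A j *v (B *v x)) = 0) \<longrightarrow> v = 0)"

lemma kalman_rank_imp_controllable:
  fixes A :: "real^'m^'m" and B :: "real^'k^'m"
  assumes rank: "kalman_rank A B = CARD('m)"
  shows "controllable A B"
  unfolding controllable_def
proof (intro allI impI)
  fix v :: "real^'m" assume perp: "\<forall>j x. v \<bullet> (mat_pow A j *v (B *v x)) = 0"
  define U where "U = (\<Union>i<CARD('m). columns (mat_pow A i ** B))"
  have "span U = UNIV"
    using rank dim_eq_full[of U] unfolding kalman_rank_def U_def by simp
  moreover have "orthogonal v x" if "x \<in> U" for x
  proof -
    from that obtain i j where "x = column j (mat_pow A i ** B)"
      unfolding U_def columns_def by blast
    then have "x = mat_pow A i *v (B *v axis j 1)"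
      by (simp only: matrix_vector_mult_basis[symmetric] matrix_vector_mul_assoc)
    then show ?thesis using perp by (simp add: orthogonal_def)
  qed
  ultimately have "orthogonal v v" by (intro orthogonal_to_span[of v]) auto
  then show "v = 0" by (simp add: orthogonal_def)
qed

lemma controllable_scaleR:
  assumes "controllable A B" "c \<noteq> 0"
  shows "controllable (c *\<^sub>R A) (c *\<^sub>R B)"
  using assms unfolding controllable_def
  by (simp add: mat_pow_scaleR_mult scaleR_matrix_vector_assoc[symmetric] matrix_vector_mult_scaleR)

lemma lin_solution_const_step:
  fixes A :: "real^'m^'m" and B :: "real^'k^'m"
  assumes sol: "cara_solution (lin_rhs A B (\<lambda>_. c)) 0 \<tau> Y" and \<tau>: "0 < \<tau>"
    and perp: "\<And>r. r \<in> {0..\<tau>} \<Longrightarrow> v \<bullet> (mat_pow A j *v Y r) = 0"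
  shows "v \<bullet> (mat_pow A j *v (B *v c)) = 0"
    and "\<And>r. r \<in> {0..\<tau>} \<Longrightarrow> v \<bullet> (mat_pow A (Suc j) *v Y r) = 0"
proof -
  define l where "l x = v \<bullet> (mat_pow A j *v x)" for x
  have l: "bounded_linear l"
    unfolding l_def by (intro bounded_linear_compose[OF bounded_linear_inner_right matrix_vector_mul_bounded_linear])
  have l_add: "l (x + y) = l x + l y" for x y
    by (simp add: l_def matrix_vector_right_distrib inner_add_right)
  define h where "h \<sigma> = l (lin_rhs A B (\<lambda>_. c) \<sigma> (Y \<sigma>))" for \<sigma>
  have rhs_cont: "continuous_on {0..\<tau>} (\<lambda>\<sigma>. lin_rhs A B (\<lambda>_. c) \<sigma> (Y \<sigma>))"
    unfolding lin_rhs_def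
    by (intro continuous_intros linear_continuous_on_compose[OF cara_solution_continuous[OF sol]]
        bounded_linear.linear matrix_vector_mul_bounded_linear)
  have h_zero: "h r = 0" if r: "r \<in> {0..\<tau>}" for r
  proof (rule integral_zero_imp_zero[OF _ \<tau> _ r])
    show "continuous_on {0..\<tau>} h"
      unfolding h_def by (rule linear_continuous_on_compose[OF rhs_cont bounded_linear.linear[OF l]])
    fix r assume r: "r \<in> {0..\<tau>}"
    have "integral {0..r} h = l (integral {0..r} (\<lambda>\<sigma>. lin_rhs A B (\<lambda>_. c) \<sigma> (Y \<sigma>)))"
      unfolding h_def using integral_linear[OF cara_solution_integrable[OF sol r] l] by (simp add: o_def)
    also have "\<dots> = l (Y r)" using sol r by (simp add: cara_solution_def)
    finally show "integral {0..r} h = 0" using perp[OF r] by (simp add: l_def)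
  qed
  have "Y 0 = 0" using sol \<tau> by (simp add: cara_solution_def)
  then have lBc: "l (B *v c) = 0" using h_zero[of 0] \<tau> by (simp add: h_def lin_rhs_def)
  then show "v \<bullet> (mat_pow A j *v (B *v c)) = 0" by (simp add: l_def)
  fix r assume "r \<in> {0..\<tau>}"
  then have "l (A *v Y r) = 0" using h_zero lBc by (simp add: h_def lin_rhs_def l_add)
  then show "v \<bullet> (mat_pow A (Suc j) *v Y r) = 0" by (simp add: l_def mat_pow_Suc_mult)
qed

lemma lin_solution_const_orthogonal:
  fixes A :: "real^'m^'m" and B :: "real^'k^'m"
  assumes sol: "cara_solution (lin_rhs A B (\<lambda>_. c)) 0 \<tau> Y" and \<tau>: "0 < \<tau>"
    and perp: "\<And>r. r \<in> {0..\<tau>} \<Longrightarrow> v \<bullet> Y r = 0"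
  shows "v \<bullet> (mat_pow A j *v (B *v c)) = 0"
proof -
  have "\<forall>r\<in>{0..\<tau>}. v \<bullet> (mat_pow A j *v Y r) = 0" for j
  proof (induction j)
    case (Suc j)
    then show ?case using lin_solution_const_step(2)[OF sol \<tau>] by blast
  qed (simp add: perp)
  then show ?thesis using lin_solution_const_step(1)[OF sol \<tau>] by blast
qed

definition window_reachable :: "real^'m^'m \<Rightarrow> real^'k^'m \<Rightarrow> real \<Rightarrow> real \<Rightarrow> real \<Rightarrow> (real^'m) set" where
  "window_reachable A B T s \<tau> = {y (s + \<tau>) | w y. meas_on T w \<and> (\<forall>t. t \<notin> {s..s + \<tau>} \<longrightarrow> w t = 0)
     \<and> cara_solution (lin_rhs A B w) 0 T y}"

lemma subspace_window_reachable: "subspace (window_reachable A B T s \<tau>)"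
  unfolding subspace_def
proof (intro conjI ballI allI)
  show "0 \<in> window_reachable A B T s \<tau>"
    unfolding window_reachable_def
    by (rule CollectI, rule exI[of _ "\<lambda>t. 0"], rule exI[of _ "\<lambda>t. 0"])
      (auto simp: meas_on_def cara_solution_def lin_rhs_def)
next
  fix x y assume "x \<in> window_reachable A B T s \<tau>" "y \<in> window_reachable A B T s \<tau>"
  then obtain w1 y1 w2 y2 where
    "x = y1 (s + \<tau>)" "meas_on T w1" "\<forall>t. t \<notin> {s..s + \<tau>} \<longrightarrow> w1 t = 0" "cara_solution (lin_rhs A B w1) 0 T y1"
    "y = y2 (s + \<tau>)" "meas_on T w2" "\<forall>t. t \<notin> {s..s + \<tau>} \<longrightarrow> w2 t = 0" "cara_solution (lin_rhs A B w2) 0 T y2"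
    unfolding window_reachable_def by blast
  then show "x + y \<in> window_reachable A B T s \<tau>"
    unfolding window_reachable_def using lin_solution_add[of A B w1 0 T y1 w2 0 y2]
    by (intro CollectI exI[of _ "\<lambda>t. w1 t + w2 t"] exI[of _ "\<lambda>t. y1 t + y2 t"]) (auto simp: meas_on_def)
next
  fix c :: real and x assume "x \<in> window_reachable A B T s \<tau>"
  then obtain w y where
    "x = y (s + \<tau>)" "meas_on T w" "\<forall>t. t \<notin> {s..s + \<tau>} \<longrightarrow> w t = 0" "cara_solution (lin_rhs A B w) 0 T y"
    unfolding window_reachable_def by blast
  then show "c *\<^sub>R x \<in> window_reachable A B T s \<tau>"
    unfolding window_reachable_def using lin_solution_scaleR[of A B w 0 T y c]
    by (intro CollectI exI[of _ "\<lambda>t. c *\<^sub>R w t"] exI[of _ "\<lambda>t. c *\<^sub>R y t"]) (auto simp: meas_on_def)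
qed

(* Switching the constant control c on for the last r time units of the window reproduces Y r. *)
lemma lin_solution_const_in_window_reachable:
  fixes A :: "real^'m^'m" and B :: "real^'k^'m"
  assumes Y: "cara_solution (lin_rhs A B (\<lambda>_. c)) 0 T Y"
    and s: "0 \<le> s" "s + \<tau> \<le> T" and r: "r \<in> {0..\<tau>}"
  shows "Y r \<in> window_reachable A B T s \<tau>"
proof -
  define t0 where "t0 = s + \<tau> - r"
  define w where "w = (\<lambda>t. indicator {t0<..s + \<tau>} t *\<^sub>R c)"
  have w_meas: "meas_on T w"
    unfolding meas_on_def w_def
    by (intro borel_measurable_scaleR borel_measurable_const measurable_restrict_space1 measurable_completion)
      simp
  have w_zero: "\<forall>t. t \<notin> {s..s + \<tau>} \<longrightarrow> w t = 0"
    using r by (auto simp: w_def t0_def)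
  have "\<exists>y. cara_solution (lin_rhs A B w) 0 T y"
    by (rule lin_solution_exists[OF _ w_meas, of "norm c"]) (use s r in \<open>auto simp: w_def indicator_def\<close>)
  then obtain y where y: "cara_solution (lin_rhs A B w) 0 T y" by blast
  have "cara_solution (lin_rhs A B w) 0 (s + \<tau>) (\<lambda>t. Y (max 0 (t - t0)))"
    unfolding w_def by (rule lin_solution_delay[OF Y]) (use s r in \<open>auto simp: t0_def\<close>)
  then have "Y r = y (s + \<tau>)"
    using lin_solution_unique[OF cara_solution_subinterval[OF y s(2)]] s r by (auto simp: t0_def)
  then show ?thesis
    unfolding window_reachable_def using w_meas w_zero y by blast
qed

lemma window_reachable_eq_UNIV:
  fixes A :: "real^'m^'m" and B :: "real^'k^'m"
  assumes ctrl: "controllable A B" and s: "0 \<le> s" "s + \<tau> \<le> T" and \<tau>: "0 < \<tau>"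
  shows "window_reachable A B T s \<tau> = UNIV"
proof (rule ccontr)
  let ?S = "window_reachable A B T s \<tau>"
  assume "?S \<noteq> UNIV"
  then have "dim ?S < DIM(real^'m)"
    using subspace_window_reachable dim_subset_UNIV[of ?S] dim_eq_full[of ?S]
    by (metis le_neq_implies_less span_eq_iff)
  then obtain v :: "real^'m" where v: "v \<noteq> 0" "\<And>x. x \<in> span ?S \<Longrightarrow> orthogonal v x"
    using orthogonal_to_subspace_exists by blast
  have "v \<bullet> (mat_pow A j *v (B *v c)) = 0" for j c
  proof -
    have "\<exists>Y. cara_solution (lin_rhs A B (\<lambda>_. c)) 0 T Y"
      by (rule lin_solution_exists[of T "\<lambda>_. c" "norm c"]) (use s \<tau> in \<open>auto simp: meas_on_def\<close>)
    then obtain Y where Y: "cara_solution (lin_rhs A B (\<lambda>_. c)) 0 T Y" by blast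
    show ?thesis
    proof (rule lin_solution_const_orthogonal[OF cara_solution_subinterval[OF Y] \<tau>])
      show "\<tau> \<le> T" using s by simp
      fix r assume "r \<in> {0..\<tau>}"
      then show "v \<bullet> Y r = 0"
        using v(2)[OF span_base[OF lin_solution_const_in_window_reachable[OF Y s]]]
        by (simp add: orthogonal_def)
    qed
  qed
  then show False using ctrl v(1) unfolding controllable_def by blast
qed

section \<open>Tracking a measurable path\<close>

definition windows :: "nat \<Rightarrow> real \<Rightarrow> real \<Rightarrow> real set" where
  "windows N h \<tau> = (\<Union>j<N. {real j * h .. real j * h + \<tau>})"

lemma windows_0 [simp]: "windows 0 h \<tau> = {}"
  by (simp add: windows_def)

lemma windows_Suc: "windows (Suc n) h \<tau> = windows n h \<tau> \<union> {real n * h .. real n * h + \<tau>}"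
  by (auto simp: windows_def lessThan_Suc)

lemma window_end_before:
  assumes "j < n" "0 \<le> h" "\<tau> < h"
  shows "real j * h + \<tau> < real n * h"
proof -
  have "real (Suc j) * h \<le> real n * h" using assms by (intro mult_right_mono) auto
  then show ?thesis using assms by (simp add: algebra_simps)
qed

lemma windows_lmeasurable: "windows N h \<tau> \<in> lmeasurable"
  unfolding windows_def by (intro lmeasurable_compact compact_UN) auto

lemma measure_windows_le:
  assumes "0 \<le> \<tau>"
  shows "measure lebesgue (windows N h \<tau>) \<le> real N * \<tau>"
proof -
  have "measure lebesgue (windows N h \<tau>) \<le> (\<Sum>j<N. measure lebesgue {real j * h .. real j * h + \<tau>})"
    unfolding windows_def by (rule measure_UNION_le) auto
  also have "\<dots> = real N * \<tau>" using assms by simp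
  finally show ?thesis .
qed

lemma windows_gap:
  assumes h: "0 < h" and \<tau>: "0 \<le> \<tau>" "\<tau> < h" and N: "0 < N"
    and t: "t \<in> {0..real N * h}" "t \<notin> windows N h \<tau>"
  obtains j where "j < N" "real j * h + \<tau> < t" "t \<le> real (Suc j) * h"
    "\<And>\<sigma>. \<sigma> \<in> {real j * h + \<tau> <..< real (Suc j) * h} \<Longrightarrow> \<sigma> \<notin> windows N h \<tau>"
proof -
  have "0 \<in> windows N h \<tau>" using N \<tau> by (force simp: windows_def)
  then have t_pos: "0 < t" using t by (cases "t = 0") auto
  define j where "j = nat \<lceil>t / h\<rceil> - 1"
  have j: "real (Suc j) = of_int \<lceil>t / h\<rceil>"
    using t_pos h by (simp add: j_def)
  have "real j * h < t"
  proof -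
    have "real j < t / h" using j by linarith
    then show ?thesis using h by (simp add: field_simps)
  qed
  moreover have "t \<le> real (Suc j) * h"
  proof -
    have "t / h \<le> real (Suc j)" using le_of_int_ceiling[of "t / h"] j by simp
    then show ?thesis using h by (simp add: pos_divide_le_eq)
  qed
  moreover have "j < N"
  proof -
    have "t / h \<le> real N" using t h by (simp add: field_simps)
    then have "\<lceil>t / h\<rceil> \<le> int N" by (simp add: ceiling_le_iff)
    then show ?thesis using j by linarith
  qed
  moreover have "real j * h + \<tau> < t"
    using t(2) \<open>real j * h < t\<close> \<open>j < N\<close> by (force simp: windows_def)
  moreover have "\<sigma> \<notin> windows N h \<tau>" if \<sigma>: "\<sigma> \<in> {real j * h + \<tau> <..< real (Suc j) * h}" for \<sigma>
  proof -
    have "\<sigma> \<notin> {real i * h .. real i * h + \<tau>}" for i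
    proof (cases "i \<le> j")
      case True
      then have "real i * h \<le> real j * h" using h by (intro mult_right_mono) auto
      then show ?thesis using \<sigma> by auto
    next
      case False
      then have "real (Suc j) * h \<le> real i * h" using h by (intro mult_right_mono) auto
      then show ?thesis using \<sigma> by auto
    qed
    then show ?thesis by (auto simp: windows_def)
  qed
  ultimately show ?thesis using that by blast
qed

lemma uniform_mesh:
  assumes "0 < T" "0 < \<epsilon>"
  obtains N :: nat where "0 < N" "T / real N < \<epsilon>"
proof -
  obtain N :: nat where N: "T / \<epsilon> < real N" using reals_Archimedean2 by blast
  moreover have "0 < T / \<epsilon>" using assms by simp
  ultimately have N_pos: "0 < real N" by linarith
  have "T < real N * \<epsilon>" using N assms by (simp add: pos_divide_less_eq)
  then have "T / real N < \<epsilon>" using N_pos by (simp add: pos_divide_less_eq mult.commute)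
  with N_pos show ?thesis using that by simp
qed

lemma lin_steer_through_windows:
  fixes A :: "real^'m^'m" and B :: "real^'k^'m"
  assumes ctrl: "controllable A B" and h: "0 < h" and \<tau>: "0 < \<tau>" "\<tau> < h" and NT: "real N * h \<le> T"
    and uh: "meas_on T uh" "\<And>t. norm (uh t) \<le> R"
  obtains u y where "meas_on T u" "\<And>t. t \<notin> windows N h \<tau> \<Longrightarrow> u t = uh t"
    "cara_solution (lin_rhs A B u) y0 T y" "\<And>j. j < N \<Longrightarrow> y (real j * h + \<tau>) = p j"
proof -
  have "\<exists>u y. meas_on T u \<and> (\<forall>t. t \<notin> windows n h \<tau> \<longrightarrow> u t = uh t)
      \<and> cara_solution (lin_rhs A B u) y0 T y \<and> (\<forall>j<n. y (real j * h + \<tau>) = p j)" if "n \<le> N" for n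
    using that
  proof (induction n)
    case 0
    have "0 \<le> real N * h" using h by simp
    then have "0 \<le> T" using NT by linarith
    then show ?case using lin_solution_exists[OF _ uh] uh(1) by fastforce
  next
    case (Suc n)
    then obtain u y where u: "meas_on T u" "\<forall>t. t \<notin> windows n h \<tau> \<longrightarrow> u t = uh t"
      and y: "cara_solution (lin_rhs A B u) y0 T y" "\<forall>j<n. y (real j * h + \<tau>) = p j"
      by auto
    have nN: "real n * h + \<tau> \<le> T"
      using window_end_before[of n N h \<tau>] Suc.prems h \<tau> NT by simp
    have "p n - y (real n * h + \<tau>) \<in> window_reachable A B T (real n * h) \<tau>"
      using window_reachable_eq_UNIV[OF ctrl _ nN \<tau>(1)] h by simp
    then obtain w yw where w: "meas_on T w" "\<forall>t. t \<notin> {real n * h..real n * h + \<tau>} \<longrightarrow> w t = 0"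
      and yw: "cara_solution (lin_rhs A B w) 0 T yw" "yw (real n * h + \<tau>) = p n - y (real n * h + \<tau>)"
      unfolding window_reachable_def by auto
    have yw_before: "yw (real j * h + \<tau>) = 0" if j: "j < n" for j
    proof (rule lin_solution_zero_while_control_zero[OF yw(1)])
      show "real j * h + \<tau> \<le> T" using window_end_before[OF j, of h \<tau>] h \<tau> nN by simp
      show "real j * h + \<tau> \<in> {0..real j * h + \<tau>}" using h \<tau> by simp
      show "\<And>t. t \<in> {0..real j * h + \<tau>} \<Longrightarrow> w t = 0"
        using w(2) window_end_before[OF j, of h \<tau>] h \<tau> by force
    qed
    show ?case
    proof (intro exI conjI allI impI)
      show "meas_on T (\<lambda>t. u t + w t)" using u(1) w(1) by (simp add: meas_on_def)
      show "cara_solution (lin_rhs A B (\<lambda>t. u t + w t)) y0 T (\<lambda>t. y t + yw t)"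
        using lin_solution_add[OF y(1) yw(1)] by simp
      fix t assume "t \<notin> windows (Suc n) h \<tau>"
      then show "u t + w t = uh t" using u(2) w(2) by (simp add: windows_Suc)
    next
      fix j assume "j < Suc n"
      then show "y (real j * h + \<tau>) + yw (real j * h + \<tau>) = p j"
        using y(2) yw(2) yw_before by (cases "j = n") auto
    qed
  qed
  then show ?thesis using that by blast
qed

lemma lin_solution_near_path_off_windows:
  fixes A :: "real^'m^'m" and B :: "real^'k^'m"
  assumes y: "cara_solution (lin_rhs A B u) y0 T y"
    and samples: "\<And>j. j < N \<Longrightarrow> y (real j * h + \<tau>) = \<phi> (real j * h + \<tau>)"
    and u: "\<And>t. t \<notin> windows N h \<tau> \<Longrightarrow> norm (u t) \<le> R" and R: "0 \<le> R"
    and mesh: "0 < h" "0 < \<tau>" "\<tau> < h" "0 < N" "real N * h = T"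
    and P: "\<And>t. t \<in> {0..T} \<Longrightarrow> norm (\<phi> t) \<le> P"
    and \<omega>: "\<And>x x'. x \<in> {0..T} \<Longrightarrow> x' \<in> {0..T} \<Longrightarrow> dist x x' \<le> h \<Longrightarrow> dist (\<phi> x) (\<phi> x') \<le> \<omega>"
    and KA: "0 \<le> KA" "\<And>x. norm (A *v x) \<le> KA * norm x"
    and KB: "0 \<le> KB" "\<And>x. norm (B *v x) \<le> KB * norm x"
    and t: "t \<in> {0..T} - windows N h \<tau>"
  shows "norm (y t - \<phi> t) \<le> h * ((KA * P + KB * R) * exp (KA * T)) + \<omega>"
proof -
  obtain j where j: "j < N" "real j * h + \<tau> < t" "t \<le> real (Suc j) * h"
    and gap: "\<And>\<sigma>. \<sigma> \<in> {real j * h + \<tau> <..< real (Suc j) * h} \<Longrightarrow> \<sigma> \<notin> windows N h \<tau>"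
    using windows_gap[OF mesh(1) _ mesh(3,4), of t] t mesh(2,5) by auto
  define a where "a = real j * h + \<tau>"
  define b where "b = real (Suc j) * h"
  have "real (Suc j) * h \<le> real N * h" using j(1) mesh(1) by (intro mult_right_mono) auto
  then have ab: "0 \<le> a" "a \<le> t" "t \<le> b" "b \<le> T" "b - a \<le> h"
    using j mesh by (auto simp: a_def b_def algebra_simps)
  have ya: "y a = \<phi> a" using samples[OF j(1)] by (simp add: a_def)
  have "norm (y t - y a) \<le> (b - a) * ((KA * P + KB * R) * exp (KA * T))"
  proof (rule lin_solution_drift[OF y ab(1) _ ab(4) _ _ R _ KA(1,2) KB(1,2)])
    show "norm (u \<sigma>) \<le> R" if "\<sigma> \<in> {a<..<b}" for \<sigma>
      using that u gap by (simp add: a_def b_def)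
  qed (use ab P[of a] ya in auto)
  also have "\<dots> \<le> h * ((KA * P + KB * R) * exp (KA * T))"
    using ab KA KB R order_trans[OF norm_ge_zero P[of a]] by (intro mult_right_mono) auto
  finally have "norm (y t - \<phi> a) \<le> h * ((KA * P + KB * R) * exp (KA * T))" using ya by simp
  moreover have "norm (\<phi> a - \<phi> t) \<le> \<omega>"
    using \<omega>[of a t] ab t by (auto simp: dist_norm)
  ultimately show ?thesis using norm_triangle_le[of "y t - \<phi> a" "\<phi> a - \<phi> t"] by simp
qed

lemma measure_large_values_small:
  fixes u :: "real \<Rightarrow> 'a::euclidean_space"
  assumes u: "u \<in> borel_measurable (lebesgue_on {0..T})" and \<epsilon>: "0 < \<epsilon>"
  obtains R where "0 \<le> R" "{t \<in> {0..T}. R < norm (u t)} \<in> lmeasurable"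
    "measure lebesgue {t \<in> {0..T}. R < norm (u t)} < \<epsilon>"
proof -
  define S where "S n = {t \<in> {0..T}. real n < norm (u t)}" for n
  have S_sets: "S n \<in> sets lebesgue" for n
  proof -
    have "{t \<in> space (lebesgue_on {0..T}). real n < norm (u t)} \<in> sets (lebesgue_on {0..T})"
      using u by measurable
    then show ?thesis by (simp add: S_def sets_restrict_space_iff)
  qed
  have S_lmeasurable: "S n \<in> lmeasurable" for n
    by (rule bounded_set_imp_lmeasurable[OF bounded_subset[of "{0..T}"] S_sets]) (auto simp: S_def)
  have "(\<lambda>n. measure lebesgue (S n)) \<longlonglongrightarrow> measure lebesgue (\<Inter>n. S n)"
  proof (rule Lim_measure_decseq)
    show "range S \<subseteq> sets lebesgue" using S_sets by auto
    show "decseq S" by (rule decseq_SucI) (auto simp: S_def)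
    show "emeasure lebesgue (S n) \<noteq> \<infinity>" for n
      using fmeasurableD2[OF S_lmeasurable[of n]] by simp
  qed
  moreover have "(\<Inter>n. S n) = {}"
    by (auto simp: S_def) (metis not_le real_arch_simple)
  ultimately have "\<forall>\<^sub>F n in sequentially. measure lebesgue (S n) < \<epsilon>"
    using \<epsilon> by (auto intro: order_tendstoD)
  then obtain n where "measure lebesgue (S n) < \<epsilon>" by (auto simp: eventually_sequentially)
  then show ?thesis using that[of "real n"] S_lmeasurable[of n] by (simp add: S_def)
qed

lemma bounded_truncation:
  fixes u :: "real \<Rightarrow> 'a::euclidean_space"
  assumes u: "meas_on T u" and \<epsilon>: "0 < \<epsilon>"
  obtains v R S where "meas_on T v" "\<And>t. norm (v t) \<le> R" "S \<in> lmeasurable" "measure lebesgue S < \<epsilon>"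
    "\<And>t. t \<in> {0..T} - S \<Longrightarrow> v t = u t"
proof -
  obtain R where R: "0 \<le> R" and S: "{t \<in> {0..T}. R < norm (u t)} \<in> lmeasurable"
    "measure lebesgue {t \<in> {0..T}. R < norm (u t)} < \<epsilon>"
    using measure_large_values_small[of u T \<epsilon>] u \<epsilon> by (auto simp: meas_on_def)
  define v where "v t = (if norm (u t) \<le> R then u t else 0)" for t
  have "{t \<in> space (lebesgue_on {0..T}). norm (u t) \<le> R} \<in> sets (lebesgue_on {0..T})"
    using u unfolding meas_on_def by measurable
  then have "meas_on T v"
    using u unfolding meas_on_def v_def by (intro measurable_If) auto
  moreover have "norm (v t) \<le> R" for t using R by (simp add: v_def)
  moreover have "v t = u t" if "t \<in> {0..T} - {t \<in> {0..T}. R < norm (u t)}" for t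
    using that by (simp add: v_def not_less)
  ultimately show ?thesis using that S by blast
qed

lemma integrable_min_1_norm_diff:
  fixes f g :: "real \<Rightarrow> 'a::euclidean_space"
  assumes "f \<in> borel_measurable (lebesgue_on {0..T})" "g \<in> borel_measurable (lebesgue_on {0..T})"
  shows "(\<lambda>t. min 1 (norm (f t - g t))) integrable_on {0..T}"
proof -
  have "(\<lambda>t. min 1 (norm (f t - g t))) \<in> borel_measurable (lebesgue_on {0..T})"
    using assms by measurable
  moreover have "norm (min 1 (norm (f t - g t))) \<le> (1::real)" for t
    by (auto simp: min_def)
  ultimately have "(\<lambda>t. min 1 (norm (f t - g t))) absolutely_integrable_on {0..T}"
    by (rule measurable_bounded_imp_absolutely_integrable)
  then show ?thesis by (simp add: absolutely_integrable_on_def)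
qed

lemma integral_indicator_le_measure:
  fixes a b :: real
  assumes "E \<in> lmeasurable"
  shows "indicat_real E integrable_on {a..b}" "integral {a..b} (indicat_real E) \<le> measure lebesgue E"
proof -
  have Eab: "E \<inter> {a..b} \<in> lmeasurable" using assms by (simp add: fmeasurable.Int)
  then show "indicat_real E integrable_on {a..b}" by (simp add: integrable_on_indicator)
  have "measure lebesgue (E \<inter> {a..b}) \<le> measure lebesgue E"
    using assms by (intro measure_mono_fmeasurable fmeasurableD Eab) auto
  then show "integral {a..b} (indicat_real E) \<le> measure lebesgue E"
    using Eab by (simp add: integral_indicator)
qed

lemma integral_min_1_norm_diff_le:
  fixes y \<phi> ys :: "real \<Rightarrow> 'a::euclidean_space"
  assumes meas: "y \<in> borel_measurable (lebesgue_on {0..T})" "\<phi> \<in> borel_measurable (lebesgue_on {0..T})"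
      "ys \<in> borel_measurable (lebesgue_on {0..T})"
    and W: "W \<in> lmeasurable" and \<kappa>: "0 \<le> \<kappa>" and T: "0 \<le> T"
    and near: "\<And>t. t \<in> {0..T} - W \<Longrightarrow> norm (y t - \<phi> t) \<le> \<kappa>"
  shows "integral {0..T} (\<lambda>t. min 1 (norm (y t - ys t)))
    \<le> measure lebesgue W + \<kappa> * T + integral {0..T} (\<lambda>t. min 1 (norm (\<phi> t - ys t)))"
proof -
  note W_int = integral_indicator_le_measure[OF W, of 0 T]
  have m_int: "(\<lambda>t. min 1 (norm (\<phi> t - ys t))) integrable_on {0..T}"
    by (rule integrable_min_1_norm_diff[OF meas(2,3)])
  have "min 1 (norm (y t - ys t)) \<le> indicat_real W t + \<kappa> + min 1 (norm (\<phi> t - ys t))"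
    if "t \<in> {0..T}" for t
  proof (cases "t \<in> W")
    case True
    have "min 1 (norm (y t - ys t)) \<le> 1" "0 \<le> min 1 (norm (\<phi> t - ys t))" by simp_all
    moreover have "indicat_real W t = 1" using True by simp
    ultimately show ?thesis using \<kappa> by linarith
  next
    case False
    then have "norm (y t - ys t) \<le> \<kappa> + norm (\<phi> t - ys t)"
      using near[of t] that norm_triangle_le[of "y t - \<phi> t" "\<phi> t - ys t"] by simp
    then show ?thesis using False \<kappa> by auto
  qed
  then have "integral {0..T} (\<lambda>t. min 1 (norm (y t - ys t)))
      \<le> integral {0..T} (\<lambda>t. indicat_real W t + \<kappa> + min 1 (norm (\<phi> t - ys t)))"
    by (intro integral_le integrable_min_1_norm_diff[OF meas(1,3)] integrable_add W_int(1) m_int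
        integrable_const_ivl)
  also have "\<dots> = integral {0..T} (indicat_real W) + \<kappa> * T + integral {0..T} (\<lambda>t. min 1 (norm (\<phi> t - ys t)))"
    using T by (simp add: integral_add[OF integrable_add[OF W_int(1) integrable_const_ivl] m_int]
        integral_add[OF W_int(1) integrable_const_ivl])
  finally show ?thesis using W_int(2) by linarith
qed

lemma continuous_approximation:
  fixes y :: "real \<Rightarrow> 'a::euclidean_space"
  assumes y: "y \<in> borel_measurable (lebesgue_on {0..T})" and \<epsilon>: "0 < \<epsilon>"
  obtains \<phi> where "continuous_on UNIV \<phi>" "integral {0..T} (\<lambda>t. min 1 (norm (\<phi> t - y t))) < \<epsilon>"
proof -
  have "y measurable_on {0..T}" using y by (simp add: measurable_on_iff_borel_measurable)
  then obtain N g where N: "negligible N" and g_cont: "\<And>n. continuous_on UNIV (g n)"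
    and g_lim: "\<And>x. x \<notin> N \<Longrightarrow> (\<lambda>n. g n x) \<longlonglongrightarrow> (if x \<in> {0..T} then y x else 0)"
    unfolding measurable_on_def by blast
  define k where "k n = (\<lambda>t. min 1 (norm (g n t - y t)))" for n
  have k_int: "k n integrable_on {0..T}" for n
    unfolding k_def
    by (intro integrable_min_1_norm_diff y continuous_imp_measurable_on_sets_lebesgue
        continuous_on_subset[OF g_cont]) auto
  define f where "f n t = (if t \<in> N then 0 else k n t)" for n t
  have f_int: "f n integrable_on {0..T}" for n
    by (rule integrable_spike[OF k_int N]) (simp add: f_def)
  have f_k: "integral {0..T} (f n) = integral {0..T} (k n)" for n
    by (rule integral_spike[OF N]) (simp add: f_def)
  have "(\<lambda>n. integral {0..T} (f n)) \<longlonglongrightarrow> integral {0..T} (\<lambda>t. 0)"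
  proof (rule dominated_convergence(2)[OF f_int integrable_const_ivl])
    show "\<And>n t. t \<in> {0..T} \<Longrightarrow> norm (f n t) \<le> 1" by (auto simp: f_def k_def)
    fix t assume t: "t \<in> {0..T}"
    show "(\<lambda>n. f n t) \<longlonglongrightarrow> 0"
    proof (cases "t \<in> N")
      case False
      then have "(\<lambda>n. g n t - y t) \<longlonglongrightarrow> 0" using g_lim[of t] t by (simp add: LIM_zero)
      then have "(\<lambda>n. min 1 (norm (g n t - y t))) \<longlonglongrightarrow> min 1 0"
        by (intro tendsto_min tendsto_const tendsto_norm_zero)
      then show ?thesis using False by (simp add: f_def k_def)
    qed (simp add: f_def)
  qed
  then have "\<forall>\<^sub>F n in sequentially. integral {0..T} (k n) < \<epsilon>"
    using \<epsilon> by (auto simp: f_k intro: order_tendstoD)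
  then obtain n where "integral {0..T} (k n) < \<epsilon>" by (auto simp: eventually_sequentially)
  then show ?thesis using that[of "g n"] g_cont[of n] by (simp add: k_def)
qed

lemma lin_track_continuous_path:
  fixes A :: "real^'m^'m" and B :: "real^'k^'m"
  assumes ctrl: "controllable A B" and T: "0 < T" and \<phi>: "continuous_on {0..T} \<phi>"
    and uh: "meas_on T uh" "\<And>t. norm (uh t) \<le> R" and \<kappa>: "0 < \<kappa>" and \<eta>: "0 < \<eta>"
  obtains u y W where "meas_on T u" "cara_solution (lin_rhs A B u) y0 T y"
    "W \<in> lmeasurable" "measure lebesgue W \<le> \<eta>"
    "\<And>t. t \<notin> W \<Longrightarrow> u t = uh t" "\<And>t. t \<in> {0..T} - W \<Longrightarrow> norm (y t - \<phi> t) \<le> \<kappa>"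
proof -
  have R: "0 \<le> R" using order_trans[OF norm_ge_zero uh(2)] .
  obtain P where P: "\<And>t. t \<in> {0..T} \<Longrightarrow> norm (\<phi> t) \<le> P"
    using compact_imp_bounded[OF compact_continuous_image[OF \<phi>]] by (metis bounded_iff imageI compact_Icc)
  obtain KA where KA: "0 < KA" "\<And>x. norm (A *v x) \<le> KA * norm x"
    using matrix_vector_mult_bound by blast
  obtain KB where KB: "0 < KB" "\<And>x. norm (B *v x) \<le> KB * norm x"
    using matrix_vector_mult_bound by blast
  obtain \<delta> where \<delta>: "0 < \<delta>"
    and \<phi>_unif: "\<And>x x'. x \<in> {0..T} \<Longrightarrow> x' \<in> {0..T} \<Longrightarrow> dist x' x < \<delta> \<Longrightarrow> dist (\<phi> x') (\<phi> x) < \<kappa> / 2"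
    using compact_uniformly_continuous[OF \<phi> compact_Icc] \<kappa> unfolding uniformly_continuous_on_def
    by (metis half_gt_zero)
  define K where "K = (KA * P + KB * R) * exp (KA * T)"
  have K: "0 \<le> K"
    using KA KB R order_trans[OF norm_ge_zero P[of 0]] T by (simp add: K_def)
  obtain N where N: "0 < N" "T / real N < min \<delta> (\<kappa> / (2 * (K + 1)))"
    using uniform_mesh[OF T, of "min \<delta> (\<kappa> / (2 * (K + 1)))"] \<delta> \<kappa> K by auto
  define h where "h = T / real N"
  have h: "0 < h" "real N * h = T" "h < \<delta>" using T N by (auto simp: h_def)
  have "h * K \<le> \<kappa> / (2 * (K + 1)) * K" using N K by (intro mult_right_mono) (auto simp: h_def)
  also have "\<dots> \<le> \<kappa> / 2" using \<kappa> K by (simp add: field_simps)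
  finally have hK: "h * K \<le> \<kappa> / 2" .
  define \<tau> where "\<tau> = min (h / 2) (\<eta> / real N)"
  have "real N * \<tau> \<le> real N * (\<eta> / real N)" by (intro mult_left_mono) (auto simp: \<tau>_def)
  then have \<tau>: "0 < \<tau>" "\<tau> < h" "real N * \<tau> \<le> \<eta>"
    using h \<eta> N by (auto simp: \<tau>_def)
  obtain u y where u: "meas_on T u" "\<And>t. t \<notin> windows N h \<tau> \<Longrightarrow> u t = uh t"
    and y: "cara_solution (lin_rhs A B u) y0 T y" "\<And>j. j < N \<Longrightarrow> y (real j * h + \<tau>) = \<phi> (real j * h + \<tau>)"
    using lin_steer_through_windows[OF ctrl h(1) \<tau>(1,2) _ uh, of N y0 "\<lambda>j. \<phi> (real j * h + \<tau>)"] h(2)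
    by auto
  have "norm (y t - \<phi> t) \<le> \<kappa>" if "t \<in> {0..T} - windows N h \<tau>" for t
  proof -
    have "norm (y t - \<phi> t) \<le> h * K + \<kappa> / 2"
      unfolding K_def
    proof (rule lin_solution_near_path_off_windows[OF y _ R _ _ _ N(1) h(2) P _ _ KA(2) _ KB(2) that])
      show "norm (u t) \<le> R" if "t \<notin> windows N h \<tau>" for t using that u(2) uh(2) by simp
      show "dist (\<phi> x) (\<phi> x') \<le> \<kappa> / 2" if "x \<in> {0..T}" "x' \<in> {0..T}" "dist x x' \<le> h" for x x'
        using \<phi>_unif[of x' x] that h(3) by (simp add: dist_commute)
    qed (use y(2) h \<tau> KA KB in auto)
    then show ?thesis using hK by simp
  qed
  moreover have "measure lebesgue (windows N h \<tau>) \<le> \<eta>"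
    using measure_windows_le[of \<tau> N h] \<tau> by simp
  ultimately show ?thesis using that[OF u(1) y(1) windows_lmeasurable] u(2) by blast
qed

lemma lin_track_measurable_path:
  fixes A :: "real^'m^'m" and B :: "real^'k^'m"
  assumes ctrl: "controllable A B" and T: "0 < T"
    and us: "meas_on T us" and ys: "meas_on T (ys :: real \<Rightarrow> real^'m)" and \<delta>: "0 < \<delta>"
  obtains u y E where "meas_on T u" "cara_solution (lin_rhs A B u) y0 T y"
    "E \<in> lmeasurable" "measure lebesgue E < \<delta>" "\<And>t. t \<in> {0..T} - E \<Longrightarrow> u t = us t"
    "integral {0..T} (\<lambda>t. min 1 (norm (y t - ys t))) < \<delta>"
proof -
  have \<delta>3: "0 < \<delta> / 3" using \<delta> by simp
  obtain R uh S where uh: "meas_on T uh" "\<And>t. norm (uh t) \<le> R"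
    and S: "S \<in> lmeasurable" "measure lebesgue S < \<delta> / 3" and uh_us: "\<And>t. t \<in> {0..T} - S \<Longrightarrow> uh t = us t"
    by (rule bounded_truncation[OF us \<delta>3]) (rule that)
  obtain \<phi> where \<phi>: "continuous_on UNIV \<phi>"
    and m_small: "integral {0..T} (\<lambda>t. min 1 (norm (\<phi> t - ys t))) < \<delta> / 3"
    using continuous_approximation[of ys T "\<delta> / 3"] ys \<delta> by (auto simp: meas_on_def)
  define \<kappa> where "\<kappa> = \<delta> / (3 * (T + 1))"
  have \<kappa>: "0 < \<kappa>" "\<kappa> * T < \<delta> / 3" using \<delta> T by (auto simp: \<kappa>_def field_simps)
  obtain u y W where u: "meas_on T u" and y: "cara_solution (lin_rhs A B u) y0 T y"
    and W: "W \<in> lmeasurable" "measure lebesgue W \<le> \<delta> / 3"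
    and u_uh: "\<And>t. t \<notin> W \<Longrightarrow> u t = uh t"
    and y_near: "\<And>t. t \<in> {0..T} - W \<Longrightarrow> norm (y t - \<phi> t) \<le> \<kappa>"
    using lin_track_continuous_path[OF ctrl T continuous_on_subset[OF \<phi> subset_UNIV] uh \<kappa>(1) \<delta>3] by blast
  have "measure lebesgue (W \<union> S) \<le> measure lebesgue W + measure lebesgue S"
    using W(1) S(1) by (intro measure_Un_le fmeasurableD)
  then have E: "W \<union> S \<in> lmeasurable" "measure lebesgue (W \<union> S) < \<delta>"
    using W S \<delta> by auto
  have "integral {0..T} (\<lambda>t. min 1 (norm (y t - ys t)))
      \<le> measure lebesgue W + \<kappa> * T + integral {0..T} (\<lambda>t. min 1 (norm (\<phi> t - ys t)))"
  proof (rule integral_min_1_norm_diff_le[OF cara_solution_measurable[OF y] _ _ W(1) _ _ y_near])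
    show "\<phi> \<in> borel_measurable (lebesgue_on {0..T})"
      by (intro continuous_imp_measurable_on_sets_lebesgue continuous_on_subset[OF \<phi>]) auto
  qed (use ys \<kappa>(1) T in \<open>auto simp: meas_on_def\<close>)
  then have "integral {0..T} (\<lambda>t. min 1 (norm (y t - ys t))) < \<delta>"
    using W(2) \<kappa>(2) m_small by linarith
  moreover have "u t = us t" if "t \<in> {0..T} - (W \<union> S)" for t
    using that u_uh uh_us by simp
  ultimately show ?thesis using that[OF u y E] by blast
qed

section \<open>Endpoints of the slow system\<close>

lemma borel_measurable_compose3:
  fixes g :: "'a::euclidean_space \<Rightarrow> 'b::euclidean_space \<Rightarrow> 'c::euclidean_space \<Rightarrow> 'd::euclidean_space"
  assumes g: "(\<lambda>(u, y, z). g u y z) \<in> borel_measurable borel"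
    and u: "u \<in> borel_measurable M" and y: "y \<in> borel_measurable M" and x: "x \<in> borel_measurable M"
  shows "(\<lambda>s. g (u s) (y s) (x s)) \<in> borel_measurable M"
proof -
  have "(\<lambda>s. (y s, x s)) \<in> M \<rightarrow>\<^sub>M borel"
    using measurable_Pair[OF y x] by (simp add: borel_prod)
  then have "(\<lambda>s. (u s, y s, x s)) \<in> M \<rightarrow>\<^sub>M borel"
    using measurable_Pair[OF u] by (metis borel_prod)
  from measurable_compose[OF this g] show ?thesis by simp
qed

definition ctrl_endpoints ::
  "real^'m^'m \<Rightarrow> real^'k^'m \<Rightarrow> (real^'k \<Rightarrow> real^'m \<Rightarrow> 'z::euclidean_space \<Rightarrow> 'z) \<Rightarrow> real^'m \<Rightarrow> 'z \<Rightarrow> real \<Rightarrow> 'z set"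
  where "ctrl_endpoints A B g y0 z0 T = {z T | u y z. meas_on T u \<and> cara_solution (lin_rhs A B u) y0 T y
     \<and> cara_solution (\<lambda>t z. g (u t) (y t) z) z0 T z}"

definition relaxed_endpoints ::
  "('u::euclidean_space \<Rightarrow> 'y::euclidean_space \<Rightarrow> 'z::euclidean_space \<Rightarrow> 'z) \<Rightarrow> 'z \<Rightarrow> real \<Rightarrow> 'z set"
  where "relaxed_endpoints g z0 T = {z T | u y z. meas_on T u \<and> meas_on T y
     \<and> cara_solution (\<lambda>t z. g (u t) (y t) z) z0 T z}"

lemma G_eps_eq_Inf_ctrl_endpoints:
  "G_eps A B g y0 z0 T G \<epsilon> = Inf (G ` ctrl_endpoints ((1 / \<epsilon>) *\<^sub>R A) ((1 / \<epsilon>) *\<^sub>R B) g y0 z0 T)"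
  unfolding G_eps_def ctrl_endpoints_def lin_rhs_scaleR by (rule arg_cong[where f = Inf]) auto

lemma G_relaxed_eq_Inf_relaxed_endpoints: "G_relaxed g z0 T G = Inf (G ` relaxed_endpoints g z0 T)"
  unfolding G_relaxed_def relaxed_endpoints_def by (rule arg_cong[where f = Inf]) auto

lemma ctrl_endpoints_subset_relaxed_endpoints:
  "ctrl_endpoints A B g y0 z0 T \<subseteq> relaxed_endpoints g z0 T"
proof
  fix x assume "x \<in> ctrl_endpoints A B g y0 z0 T"
  then obtain u y z where "x = z T" "meas_on T u" "cara_solution (lin_rhs A B u) y0 T y"
    "cara_solution (\<lambda>t z. g (u t) (y t) z) z0 T z"
    unfolding ctrl_endpoints_def by blast
  moreover from this(3) have "meas_on T y" unfolding meas_on_def by (rule cara_solution_measurable)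
  ultimately show "x \<in> relaxed_endpoints g z0 T" unfolding relaxed_endpoints_def by blast
qed

lemma Inf_image_eq_if_dense:
  fixes G :: "'a::heine_borel \<Rightarrow> real"
  assumes G: "continuous_on UNIV G"
    and S: "S \<noteq> {}" "S \<subseteq> S'" "S' \<subseteq> closure S" "bounded S'"
  shows "Inf (G ` S) = Inf (G ` S')"
proof (rule antisym)
  have "compact (G ` closure S')"
    using S(4) by (intro compact_continuous_image continuous_on_subset[OF G] compact_closure[THEN iffD2]) auto
  then have bdd: "bdd_below (G ` S')"
    by (meson bdd_below_mono bounded_imp_bdd_below closure_subset compact_imp_bounded image_mono)
  then show "Inf (G ` S') \<le> Inf (G ` S)"
    using S by (intro cInf_superset_mono) auto
  have "bdd_below (G ` S)" using bdd S(2) by (meson bdd_below_mono image_mono)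
  then have "G ` closure S \<subseteq> {Inf (G ` S)..}"
    by (intro image_closure_subset continuous_on_subset[OF G]) (auto intro: cInf_lower)
  then show "Inf (G ` S) \<le> Inf (G ` S')"
  proof (intro cInf_greatest)
    show "G ` S' \<noteq> {}" using S(1,2) by blast
    fix v assume "v \<in> G ` S'"
    then have "v \<in> G ` closure S" using S(3) by blast
    with \<open>G ` closure S \<subseteq> {Inf (G ` S)..}\<close> show "Inf (G ` S) \<le> v" by auto
  qed
qed

locale controlled_vector_field =
  fixes g :: "real^'k \<Rightarrow> real^'m \<Rightarrow> 'z::euclidean_space \<Rightarrow> 'z" and L M :: real
  assumes measurable: "(\<lambda>(u, y, z). g u y z) \<in> borel_measurable borel"
    and lipschitz: "\<And>u y z y' z'. norm (g u y z - g u y' z') \<le> L * norm ((y, z) - (y', z'))"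
    and L_nonneg: "0 \<le> L"
    and bounded: "\<And>u y z. norm (g u y z) \<le> M"
begin

lemma lipschitz_state: "norm (g u y z - g u y z') \<le> L * norm (z - z')"
  using lipschitz[of u y z y z'] by (simp add: norm_Pair)

lemma lipschitz_input: "norm (g u y z - g u y' z) \<le> L * norm (y - y')"
  using lipschitz[of u y z y' z] by (simp add: norm_Pair)

lemma measurable_rhs_along:
  fixes x :: "real \<Rightarrow> 'z"
  assumes "meas_on T u" "meas_on T y" "x \<in> borel_measurable (lebesgue_on {0..T})"
  shows "(\<lambda>s. g (u s) (y s) (x s)) \<in> borel_measurable (lebesgue_on {0..T})"
  using borel_measurable_compose3[OF measurable] assms by (simp add: meas_on_def)

lemma solution_exists:
  assumes T: "0 \<le> T" and u: "meas_on T u" and y: "meas_on T y"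
  shows "\<exists>z. cara_solution (\<lambda>t z. g (u t) (y t) z) z0 T z"
proof -
  interpret lipschitz_rhs "\<lambda>t z. g (u t) (y t) z" T "L + 1" M
  proof
    fix x :: "real \<Rightarrow> 'z" assume "continuous_on {0..T} x"
    then show "(\<lambda>s. g (u s) (y s) (x s)) \<in> borel_measurable (lebesgue_on {0..T})"
      by (intro measurable_rhs_along u y continuous_imp_measurable_on_sets_lebesgue) auto
  next
    fix s x x'
    show "norm (g (u s) (y s) x - g (u s) (y s) x') \<le> (L + 1) * norm (x - x')"
      using lipschitz_state[of "u s" "y s" x x'] by (simp add: distrib_right add_increasing2)
  qed (use T L_nonneg bounded in auto)
  show ?thesis by (rule cara_solution_exists)
qed

lemma endpoint_bound:
  assumes z: "cara_solution (\<lambda>t z. g (u t) (y t) z) z0 T z" and T: "0 \<le> T"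
  shows "z T \<in> cball z0 (M * T)"
proof -
  have "norm (integral {0..T} (\<lambda>s. g (u s) (y s) (z s))) \<le> integral {0..T} (\<lambda>s. M)"
    using cara_solution_integrable[OF z, of T] T bounded by (intro integral_norm_bound_integral) auto
  moreover have "z T = z0 + integral {0..T} (\<lambda>s. g (u s) (y s) (z s))"
    using z T unfolding cara_solution_def by auto
  ultimately show ?thesis using T by (simp add: dist_norm mult.commute)
qed

lemma M_nonneg: "0 \<le> M"
  using order_trans[OF norm_ge_zero bounded] .

lemma norm_diff_le: "norm (g u y z - g u' y' z') \<le> 2 * M"
  using norm_triangle_ineq4[of "g u y z" "g u' y' z'"] bounded[of u y z] bounded[of u' y' z'] by simp

lemma norm_diff_le_min_1: "norm (g u y z - g u y' z) \<le> (2 * M + L) * min 1 (norm (y - y'))"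
proof (cases "norm (y - y') \<le> 1")
  case True
  have "L * norm (y - y') \<le> (2 * M + L) * norm (y - y')"
    using M_nonneg by (intro mult_right_mono) auto
  then show ?thesis using True lipschitz_input[of u y z y'] by simp
next
  case False
  then show ?thesis using norm_diff_le[of u y z u y' z] L_nonneg by simp
qed

lemma integral_rhs_difference_le:
  assumes u: "meas_on T u" "meas_on T us" and y: "meas_on T y" "meas_on T ys"
    and z: "z \<in> borel_measurable (lebesgue_on {0..T})"
    and E: "E \<in> lmeasurable" and agree: "\<And>t. t \<in> {0..T} - E \<Longrightarrow> u t = us t"
  defines "D \<equiv> \<lambda>s. norm (g (u s) (y s) (z s) - g (us s) (ys s) (z s))"
  shows "D integrable_on {0..T}"
    and "integral {0..T} D \<le> 2 * M * measure lebesgue E + (2 * M + L) * integral {0..T} (\<lambda>s. min 1 (norm (y s - ys s)))"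
proof -
  have "D \<in> borel_measurable (lebesgue_on {0..T})"
    unfolding D_def using measurable_rhs_along[OF u(1) y(1) z] measurable_rhs_along[OF u(2) y(2) z]
    by measurable
  then have "D absolutely_integrable_on {0..T}"
    by (rule measurable_bounded_imp_absolutely_integrable[where B="2 * M"]) (simp add: D_def norm_diff_le)
  then show D_int: "D integrable_on {0..T}" by (simp add: absolutely_integrable_on_def)
  note E_int = integral_indicator_le_measure[OF E, of 0 T]
  have m_int: "(\<lambda>s. min 1 (norm (y s - ys s))) integrable_on {0..T}"
    using y unfolding meas_on_def by (rule integrable_min_1_norm_diff)
  have "D s \<le> 2 * M * indicat_real E s + (2 * M + L) * min 1 (norm (y s - ys s))" if "s \<in> {0..T}" for s
  proof (cases "s \<in> E")
    case True
    then show ?thesis using norm_diff_le M_nonneg L_nonneg by (simp add: D_def add_increasing2)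
  next
    case False
    then show ?thesis using that agree[of s] norm_diff_le_min_1 by (simp add: D_def)
  qed
  moreover have i1: "(\<lambda>s. 2 * M * indicat_real E s) integrable_on {0..T}"
    using integrable_on_cmult_left[OF E_int(1)] by simp
  moreover have i2: "(\<lambda>s. (2 * M + L) * min 1 (norm (y s - ys s))) integrable_on {0..T}"
    using integrable_on_cmult_left[OF m_int] by simp
  ultimately have "integral {0..T} D
      \<le> integral {0..T} (\<lambda>s. 2 * M * indicat_real E s + (2 * M + L) * min 1 (norm (y s - ys s)))"
    by (intro integral_le D_int integrable_add) auto
  also have "\<dots> = 2 * M * integral {0..T} (indicat_real E) + (2 * M + L) * integral {0..T} (\<lambda>s. min 1 (norm (y s - ys s)))"
    by (simp add: integral_add[OF i1 i2])
  also have "\<dots> \<le> 2 * M * measure lebesgue E + (2 * M + L) * integral {0..T} (\<lambda>s. min 1 (norm (y s - ys s)))"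
    using E_int(2) M_nonneg by (simp add: mult_left_mono)
  finally show "integral {0..T} D \<le> 2 * M * measure lebesgue E + (2 * M + L) * integral {0..T} (\<lambda>s. min 1 (norm (y s - ys s)))" .
qed

lemma endpoint_approximation:
  fixes A :: "real^'m^'m" and B :: "real^'k^'m"
  assumes ctrl: "controllable A B" and T: "0 < T"
    and us: "meas_on T us" and ys: "meas_on T ys"
    and zs: "cara_solution (\<lambda>t z. g (us t) (ys t) z) z0 T zs" and \<eta>: "0 < \<eta>"
  obtains u y z where "meas_on T u" "cara_solution (lin_rhs A B u) y0 T y"
    "cara_solution (\<lambda>t z. g (u t) (y t) z) z0 T z" "dist (z T) (zs T) < \<eta>"
proof -
  define C where "C = 4 * M + L"
  define \<delta> where "\<delta> = \<eta> / ((C + 1) * exp (L * T))"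
  have C: "0 \<le> C" using M_nonneg L_nonneg by (simp add: C_def)
  have \<delta>: "0 < \<delta>" using \<eta> C by (simp add: \<delta>_def)
  obtain u y E where u: "meas_on T u" and y: "cara_solution (lin_rhs A B u) y0 T y"
    and E: "E \<in> lmeasurable" "measure lebesgue E < \<delta>"
    and u_us: "\<And>t. t \<in> {0..T} - E \<Longrightarrow> u t = us t"
    and m_small: "integral {0..T} (\<lambda>t. min 1 (norm (y t - ys t))) < \<delta>"
    by (rule lin_track_measurable_path[OF ctrl T us ys \<delta>]) (rule that)
  have y_meas: "meas_on T y" using cara_solution_measurable[OF y] by (simp add: meas_on_def)
  obtain z where z: "cara_solution (\<lambda>t z. g (u t) (y t) z) z0 T z"
    using solution_exists[OF _ u y_meas] T by fastforce
  note D = integral_rhs_difference_le[OF u us y_meas ys cara_solution_measurable[OF zs] E(1) u_us]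
  have "integral {0..T} (\<lambda>s. norm (g (u s) (y s) (zs s) - g (us s) (ys s) (zs s))) \<le> C * \<delta>"
    using D(2) E(2) m_small M_nonneg L_nonneg
      mult_left_mono[of "measure lebesgue E" \<delta> "2 * M"] mult_left_mono[OF less_imp_le[OF m_small], of "2 * M + L"]
    by (simp add: C_def algebra_simps)
  then have "norm (z T - zs T) \<le> C * \<delta> * exp (L * T)"
    using cara_solution_stability[OF lipschitz_state L_nonneg z zs D(1), of T] T
    by (auto intro: order_trans mult_right_mono)
  also have "\<dots> = \<eta> * (C / (C + 1))"
    using C by (simp add: \<delta>_def)
  also have "\<dots> < \<eta>"
    using mult_strict_left_mono[of "C / (C + 1)" 1 \<eta>] \<eta> C by simp
  finally show ?thesis using that[OF u y z] by (simp add: dist_norm)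
qed

lemma ctrl_endpoints_nonempty:
  fixes A :: "real^'m^'m" and B :: "real^'k^'m"
  assumes T: "0 \<le> T"
  shows "ctrl_endpoints A B g y0 z0 T \<noteq> {}"
proof -
  have u: "meas_on T (\<lambda>_. 0 :: real^'k)" by (simp add: meas_on_def)
  have "\<exists>y. cara_solution (lin_rhs A B (\<lambda>_. 0)) y0 T y"
    by (rule lin_solution_exists[OF T u, of 0]) simp
  then obtain y where y: "cara_solution (lin_rhs A B (\<lambda>_. 0)) y0 T y" by blast
  obtain z where z: "cara_solution (\<lambda>t z. g 0 (y t) z) z0 T z"
    using solution_exists[OF T u, of y] cara_solution_measurable[OF y] by (auto simp: meas_on_def)
  have "z T \<in> ctrl_endpoints A B g y0 z0 T"
    unfolding ctrl_endpoints_def using u y z by (intro CollectI exI[of _ "\<lambda>_. 0"] exI[of _ y] exI[of _ z]) simp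
  then show ?thesis by blast
qed

lemma relaxed_endpoints_bounded:
  assumes "0 \<le> T"
  shows "bounded (relaxed_endpoints g z0 T)"
  using endpoint_bound assms
  by (intro bounded_subset[OF bounded_cball[of z0 "M * T"]]) (auto simp: relaxed_endpoints_def)

lemma relaxed_endpoints_subset_closure:
  fixes A :: "real^'m^'m" and B :: "real^'k^'m"
  assumes "controllable A B" "0 < T"
  shows "relaxed_endpoints g z0 T \<subseteq> closure (ctrl_endpoints A B g y0 z0 T)"
proof
  fix x assume "x \<in> relaxed_endpoints g z0 T"
  then obtain us ys zs where x: "x = zs T" and us: "meas_on T us" and ys: "meas_on T ys"
    and zs: "cara_solution (\<lambda>t z. g (us t) (ys t) z) z0 T zs"
    unfolding relaxed_endpoints_def by blast
  have "\<exists>z'\<in>ctrl_endpoints A B g y0 z0 T. dist z' x < \<eta>" if \<eta>: "0 < \<eta>" for \<eta>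
  proof -
    obtain u y z where "meas_on T u" "cara_solution (lin_rhs A B u) y0 T y"
      and z: "cara_solution (\<lambda>t z. g (u t) (y t) z) z0 T z" "dist (z T) (zs T) < \<eta>"
      using endpoint_approximation[OF assms us ys zs \<eta>] .
    then have "z T \<in> ctrl_endpoints A B g y0 z0 T"
      unfolding ctrl_endpoints_def by (intro CollectI exI[of _ u] exI[of _ y] exI[of _ z]) simp
    then show ?thesis using z(2) x by blast
  qed
  then show "x \<in> closure (ctrl_endpoints A B g y0 z0 T)"
    by (simp add: closure_approachable)
qed

end

theorem corollary1:
  fixes A :: "real^'m^'m" and B :: "real^'k^'m"
    and g :: "real^'k \<Rightarrow> real^'m \<Rightarrow> real^'n \<Rightarrow> real^'n"
    and y0 :: "real^'m" and z0 :: "real^'n" and T :: real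
    and G :: "real^'n \<Rightarrow> real" and \<epsilon> :: real
  assumes rank: "kalman_rank A B = CARD('m)"
    and g_meas: "(\<lambda>(u, y, z). g u y z) \<in> borel_measurable borel"
    and g_bdd: "bounded (range (\<lambda>(u, y, z). g u y z))"
    and g_lip: "\<exists>L. \<forall>u y z y' z'. norm (g u y z - g u y' z') \<le> L * norm ((y, z) - (y', z'))"
    and T_pos: "T > 0"
    and G_cont: "continuous_on UNIV G"
    and eps_pos: "\<epsilon> > 0"
  shows "G_eps A B g y0 z0 T G \<epsilon> = G_relaxed g z0 T G"
proof -
  obtain L where L: "\<And>u y z y' z'. norm (g u y z - g u y' z') \<le> L * norm ((y, z) - (y', z'))"
    using g_lip by blast
  obtain M where M: "\<And>u y z. norm (g u y z) \<le> M"
    using g_bdd unfolding bounded_iff by fastforce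
  interpret controlled_vector_field g "\<bar>L\<bar>" M
  proof
    fix u y z y' z'
    show "norm (g u y z - g u y' z') \<le> \<bar>L\<bar> * norm ((y, z) - (y', z'))"
      using L[of u y z y' z'] mult_right_mono[OF abs_ge_self[of L] norm_ge_zero] by (rule order_trans)
  qed (use g_meas M in auto)
  let ?A = "(1 / \<epsilon>) *\<^sub>R A" and ?B = "(1 / \<epsilon>) *\<^sub>R B"
  have ctrl: "controllable ?A ?B"
    using controllable_scaleR[OF kalman_rank_imp_controllable[OF rank]] eps_pos by simp
  have T: "0 \<le> T" using T_pos by simp
  have "Inf (G ` ctrl_endpoints ?A ?B g y0 z0 T) = Inf (G ` relaxed_endpoints g z0 T)"
    by (rule Inf_image_eq_if_dense[OF G_cont ctrl_endpoints_nonempty[OF T]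
          ctrl_endpoints_subset_relaxed_endpoints relaxed_endpoints_subset_closure[OF ctrl T_pos]
          relaxed_endpoints_bounded[OF T]])
  then show ?thesis
    by (simp add: G_eps_eq_Inf_ctrl_endpoints G_relaxed_eq_Inf_relaxed_endpoints)
qed

end
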